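(* Let $\Omega\subset\mathbb{R}^N$ be an unbounded domain, $a\in C(\bar\Omega)\cap L^\infty(\Omega)$, and $K:\Omega\times\Omega\to[0,\infty)$ such that for every $x\in\Omega$ the map $K(x,\cdot)$ is measurable, for almost every $y\in\Omega$ the map $K(\cdot,y)$ is uniformly continuous, and there exist $r_0\ge r_1>0$, $C_0\ge c_0>0$ with $C_0\,\mathbb{1}_{\Omega\cap B_{r_0}(x)}(y)\ge K(x,y)\ge c_0\,\mathbb{1}_{\Omega\cap B_{r_1}(x)}(y)$ for all $x,y\in\Omega$. Assume further that $K$ is symmetric and $p(x):=\int_\Omega K(x,y)\,dy\in L^\infty(\Omega)$. Let $\Omega_n:=\Omega\cap B_n(0)$. Then $$\lambda_p(\mathcal{L}_\Omega+a)\le\liminf_{n\to\infty}\lambda_v(\mathcal{L}_{\Omega_n}+a)\le\lambda_p'(\mathcal{L}_\Omega+a).$$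
   Context: For $D\subset\Omega$, $\mathcal{L}_D[\varphi](x):=\int_D K(x,y)\varphi(y)\,dy$. $\lambda_p(\mathcal{L}_\Omega+a):=\sup\{\lambda:\exists\varphi\in C(\bar\Omega),\ \varphi>0,\ \mathcal{L}_\Omega[\varphi]+a\varphi+\lambda\varphi\le0\text{ in }\Omega\}$; $\lambda_p'(\mathcal{L}_\Omega+a):=\inf\{\lambda:\exists\varphi\in C(\Omega)\cap L^\infty(\Omega),\ \varphi\ge0,\ \varphi\not\equiv0,\ \mathcal{L}_\Omega[\varphi]+(a+\lambda)\varphi\ge0\text{ in }\Omega\}$; $\lambda_v(\mathcal{L}_D+a):=\inf_{\varphi\in L^2(D),\varphi\not\equiv0}-\frac{\langle\mathcal{L}_D[\varphi]+a\varphi,\varphi\rangle_{L^2(D)}}{\|\varphi\|_{L^2(D)}^2}$. If $\Omega_n$ is not connected, the same definitions are used verbatim. *)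

theory Defs
  imports "HOL-Analysis.Analysis"
begin

definition nlop :: "('a::euclidean_space \<Rightarrow> 'a \<Rightarrow> real) \<Rightarrow> 'a set \<Rightarrow> ('a \<Rightarrow> real) \<Rightarrow> 'a \<Rightarrow> real" where
  "nlop K D \<phi> x = (LINT y|lebesgue_on D. K x y * \<phi> y)"

definition Linfty :: "'a measure \<Rightarrow> ('a \<Rightarrow> real) \<Rightarrow> bool" where
  "Linfty M f \<longleftrightarrow> f \<in> borel_measurable M \<and> (\<exists>B. AE x in M. \<bar>f x\<bar> \<le> B)"

definition L2 :: "'a measure \<Rightarrow> ('a \<Rightarrow> real) \<Rightarrow> bool" where
  "L2 M f \<longleftrightarrow> f \<in> borel_measurable M \<and> integrable M (\<lambda>x. (f x)\<^sup>2)"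

definition lambda_p :: "('a::euclidean_space \<Rightarrow> 'a \<Rightarrow> real) \<Rightarrow> ('a \<Rightarrow> real) \<Rightarrow> 'a set \<Rightarrow> ereal" where
  "lambda_p K a \<Omega> = Sup (ereal ` {l. \<exists>\<phi>. continuous_on (closure \<Omega>) \<phi> \<and>
        (\<forall>x\<in>closure \<Omega>. \<phi> x > 0) \<and>
        (\<forall>x\<in>\<Omega>. nlop K \<Omega> \<phi> x + a x * \<phi> x + l * \<phi> x \<le> 0)})"

definition lambda_p' :: "('a::euclidean_space \<Rightarrow> 'a \<Rightarrow> real) \<Rightarrow> ('a \<Rightarrow> real) \<Rightarrow> 'a set \<Rightarrow> ereal" where
  "lambda_p' K a \<Omega> = Inf (ereal ` {l. \<exists>\<phi>. continuous_on \<Omega> \<phi> \<and> Linfty (lebesgue_on \<Omega>) \<phi> \<and>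
        (\<forall>x\<in>\<Omega>. \<phi> x \<ge> 0) \<and> (\<exists>x\<in>\<Omega>. \<phi> x \<noteq> 0) \<and>
        (\<forall>x\<in>\<Omega>. nlop K \<Omega> \<phi> x + (a x + l) * \<phi> x \<ge> 0)})"

definition lambda_v :: "('a::euclidean_space \<Rightarrow> 'a \<Rightarrow> real) \<Rightarrow> ('a \<Rightarrow> real) \<Rightarrow> 'a set \<Rightarrow> ereal" where
  "lambda_v K a D = Inf (ereal ` {- (LINT x|lebesgue_on D. (nlop K D \<phi> x + a x * \<phi> x) * \<phi> x)
                                    / (LINT x|lebesgue_on D. (\<phi> x)\<^sup>2) | \<phi>.
        L2 (lebesgue_on D) \<phi> \<and> \<not> (AE x in lebesgue_on D. \<phi> x = 0)})"

end

theory Submission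
  imports Defs "HOL-Real_Asymp.Real_Asymp"
begin

text \<open>
  Let \<open>h > 0\<close> be continuous up to the boundary with
  \<open>L\<^sub>\<Omega> h + a h + l h \<le> 0\<close>. Since \<open>K \<ge> 0\<close>, truncating the domain to \<open>\<Omega>\<^sub>n\<close> only decreases
  \<open>L h\<close>, so \<open>h\<close> is also a supersolution on \<open>\<Omega>\<^sub>n\<close>. Picone's argument -- integrating the weighted
  Young inequality \<open>\<psi>(x)\<psi>(y) \<le> (\<psi>(x)\<^sup>2 h(y)/h(x) + h(x) \<psi>(y)\<^sup>2/h(y))/2\<close> against the symmetric
  kernel -- then gives \<open>\<langle>L \<psi>, \<psi>\<rangle> \<le> \<integral> (\<psi>\<^sup>2/h) L h \<le> -\<integral> (a + l) \<psi>\<^sup>2\<close>, i.e. \<open>l \<le> \<lambda>\<^sub>v(\<Omega>\<^sub>n)\<close>.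

  Let \<open>h \<ge> 0\<close>, \<open>h \<noteq> 0\<close> be bounded with \<open>L\<^sub>\<Omega> h + (a + l) h \<ge> 0\<close> and use \<open>h\<close> itself as test
  function on \<open>\<Omega> \<inter> B\<^sub>s\<close>. As \<open>K(x,y) = 0\<close> for \<open>|x - y| \<ge> r\<^sub>0\<close>, the error of truncating the operator
  only involves the shell \<open>s - r\<^sub>0 < |x| < s + r\<^sub>0\<close>, and Young's inequality bounds the Rayleigh
  quotient by \<open>l + M (m(s + r\<^sub>0) - m(s - r\<^sub>0)) / (2 m(s))\<close>, where \<open>m(s) = \<integral>\<^bsub>\<Omega> \<inter> B\<^sub>s\<^esub> h\<^sup>2\<close> and \<open>M\<close>
  bounds \<open>\<integral> K(x,y) dy\<close>. If \<open>\<lambda>\<^sub>v(\<Omega>\<^sub>n) > l + \<epsilon>\<close> for all large \<open>n\<close>, then \<open>m\<close> grows geometrically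
  along an arithmetic progression, contradicting \<open>m(s) = O(s\<^sup>N)\<close>.
\<close>

lemma integral_lebesgue_on_subset:
  fixes f :: "'a::euclidean_space \<Rightarrow> real"
  assumes "T \<subseteq> S" "T \<in> sets lebesgue" "S \<in> sets lebesgue"
  shows "integral\<^sup>L (lebesgue_on T) f = (LINT y|lebesgue_on S. indicator T y * f y)"
proof -
  have eq: "lebesgue_on T = restrict_space (lebesgue_on S) T"
    using restrict_restrict_space[of S lebesgue T] assms by (simp add: Int_absorb1)
  have "T \<inter> space (lebesgue_on S) \<in> sets (lebesgue_on S)"
    using assms by (simp add: Int_absorb1 sets_restrict_space_iff)
  from integral_restrict_space[OF this, of f] show ?thesis unfolding eq by simp
qed

lemma finite_measure_lebesgue_on_bounded:
  "bounded S \<Longrightarrow> S \<in> sets lebesgue \<Longrightarrow> finite_measure (lebesgue_on S)"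
  by (intro finite_measure_lebesgue_on bounded_set_imp_lmeasurable)

lemma integral_indicator_ball_le:
  fixes S :: "'a::euclidean_space set"
  assumes "bounded S" "S \<in> sets lebesgue"
  shows "(LINT y|lebesgue_on S. indicator (ball c r) y) \<le> measure lborel (ball (0::'a) r)"
proof -
  interpret finite_measure "lebesgue_on S" using assms by (rule finite_measure_lebesgue_on_bounded)
  have "(LINT y|lebesgue_on S. indicator (ball c r) y) = measure (lebesgue_on S) (ball c r \<inter> S)"
    by simp
  also have "\<dots> = measure lebesgue (ball c r \<inter> S)"
    using assms by (intro measure_restrict_space) auto
  also have "\<dots> \<le> measure lebesgue (ball c r)"
    using assms by (intro measure_mono_fmeasurable) auto
  also have "\<dots> = measure lborel (ball (0::'a) r)"
    by (cases "r \<ge> 0") (simp_all add: content_ball ball_empty)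
  finally show ?thesis .
qed

lemma abs_le_if_AE_abs_le_open:
  fixes g :: "'a::euclidean_space \<Rightarrow> real"
  assumes U: "open U" and g: "continuous_on U g" and ae: "AE x in lebesgue_on U. \<bar>g x\<bar> \<le> B"
    and x: "x \<in> U"
  shows "\<bar>g x\<bar> \<le> B"
proof (rule ccontr)
  assume nx: "\<not> \<bar>g x\<bar> \<le> B"
  define V where "V = g -` {y. B < \<bar>y\<bar>} \<inter> U"
  have "open {y::real. B < \<bar>y\<bar>}" by (rule open_Collect_less) (auto intro!: continuous_intros)
  then have "open V"
    unfolding V_def using continuous_on_open_vimage[OF U, THEN iffD1, OF g, rule_format] by blast
  have "U \<inter> space lebesgue \<in> sets lebesgue" using U by (simp add: borel_open)
  then have "AE y in lebesgue. y \<in> U \<longrightarrow> \<bar>g y\<bar> \<le> B"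
    using ae by (simp add: AE_restrict_space_iff)
  then have "AE y \<in> V in lebesgue. y \<in> {}"
    by (rule eventually_mono) (auto simp: V_def)
  moreover have "x \<in> V" using nx x by (simp add: V_def not_le)
  ultimately show False using mem_closed_if_AE_lebesgue_open[OF \<open>open V\<close> closed_empty] by blast
qed

lemma continuous_on_closure_bounded_abs:
  fixes g :: "'a::euclidean_space \<Rightarrow> real"
  assumes "continuous_on (closure A) g" "bounded T" "T \<subseteq> A"
  obtains B where "\<And>x. x \<in> T \<Longrightarrow> \<bar>g x\<bar> \<le> B"
proof -
  have "closure T \<subseteq> closure A" using assms(3) by (rule closure_mono)
  then have "continuous_on (closure T) g" using assms(1) continuous_on_subset by blast
  moreover have "compact (closure T)" using assms(2) by (simp add: compact_closure)
  ultimately obtain B where "\<And>x. x \<in> closure T \<Longrightarrow> norm (g x) \<le> B"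
    using continuous_on_compact_bound by blast
  then show thesis using closure_subset that by force
qed

lemma continuous_on_closure_positive_lower_bound:
  fixes g :: "'a::euclidean_space \<Rightarrow> real"
  assumes "continuous_on (closure A) g" "\<And>x. x \<in> closure A \<Longrightarrow> g x > 0" "bounded T" "T \<subseteq> A"
  obtains m where "m > 0" "\<And>x. x \<in> T \<Longrightarrow> m \<le> g x"
proof (cases "T = {}")
  case True
  then show thesis using that[of 1] by simp
next
  case False
  have sub: "closure T \<subseteq> closure A" using assms(4) by (rule closure_mono)
  then have "continuous_on (closure T) g" using assms(1) continuous_on_subset by blast
  moreover have "closure T \<noteq> {}" using False by simp
  moreover have "compact (closure T)" using assms(3) by (simp add: compact_closure)
  ultimately obtain z where z: "z \<in> closure T" "\<And>y. y \<in> closure T \<Longrightarrow> g z \<le> g y"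
    using continuous_attains_inf by metis
  show thesis
  proof (rule that)
    show "g z > 0" using assms(2) sub z(1) by blast
    show "g z \<le> g x" if "x \<in> T" for x using z(2) closure_subset that by blast
  qed
qed

lemma dense_sequence_in_open:
  fixes U :: "'a::{metric_space, second_countable_topology} set"
  assumes "open U" "U \<noteq> {}"
  obtains d :: "nat \<Rightarrow> 'a" where "range d \<subseteq> U" "\<And>x e. x \<in> U \<Longrightarrow> e > 0 \<Longrightarrow> \<exists>i. dist x (d i) < e"
proof -
  obtain D :: "'a set" where D: "countable D" "\<And>X. open X \<Longrightarrow> X \<noteq> {} \<Longrightarrow> \<exists>d\<in>D. d \<in> X"
    using countable_dense_exists by blast
  have ne: "D \<inter> U \<noteq> {}" using D(2)[OF assms] by auto
  have r: "range (from_nat_into (D \<inter> U)) = D \<inter> U"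
    using D(1) ne by (simp add: range_from_nat_into)
  show thesis
  proof (rule that)
    show "range (from_nat_into (D \<inter> U)) \<subseteq> U" using r by auto
    fix x e assume "x \<in> U" "(e::real) > 0"
    then have "x \<in> ball x e \<inter> U" by simp
    then have "open (ball x e \<inter> U)" "ball x e \<inter> U \<noteq> {}" using assms(1) by (auto simp del: Int_iff mem_ball)
    then obtain c where "c \<in> D" "c \<in> ball x e \<inter> U" using D(2) by blast
    then have "c \<in> range (from_nat_into (D \<inter> U))" using r by auto
    then obtain i where "c = from_nat_into (D \<inter> U) i" by auto
    then show "\<exists>i. dist x (from_nat_into (D \<inter> U) i) < e" using \<open>c \<in> ball x e \<inter> U\<close> by auto
  qed
qed

lemma Int_ball_subset_Int_ball_add:
  fixes x :: "'a::real_normed_vector"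
  assumes "norm x < t"
  shows "A \<inter> ball x r \<subseteq> A \<inter> ball 0 (t + r)"
proof
  fix y assume y: "y \<in> A \<inter> ball x r"
  have "norm y \<le> norm x + dist x y" by (metis dist_commute dist_norm norm_triangle_sub)
  then show "y \<in> A \<inter> ball 0 (t + r)" using assms y by auto
qed

lemma weighted_young:
  fixes a b p q :: real
  assumes "0 < p" "0 < q"
  shows "a * b \<le> (1/2) * (a^2 / p * q) + (1/2) * (p * (b^2 / q))"
proof -
  have "(1/2) * (a^2 / p * q) + (1/2) * (p * (b^2 / q)) - a * b = (a*q - b*p)^2 / (2*p*q)"
    using assms by (simp add: field_simps power2_eq_square)
  moreover have "0 \<le> (a*q - b*p)^2 / (2*p*q)" using assms by simp
  ultimately show ?thesis by simp
qed

lemma Liminf_le_of_frequently: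
  fixes f :: "'a \<Rightarrow> 'b::complete_linorder"
  assumes "\<exists>\<^sub>F x in F. f x \<le> c"
  shows "Liminf F f \<le> c"
proof (rule Liminf_least)
  fix P assume "eventually P F"
  from frequently_eventually_conj[OF assms this] obtain x where "P x \<and> f x \<le> c"
    by (rule frequentlyE)
  then show "(INF x\<in>Collect P. f x) \<le> c" by (intro INF_lower2) auto
qed

definition bdd_measurable :: "'a::euclidean_space set \<Rightarrow> ('a \<Rightarrow> real) \<Rightarrow> bool" where
  "bdd_measurable S f \<longleftrightarrow> f \<in> borel_measurable (lebesgue_on S) \<and> (\<exists>B. \<forall>x\<in>S. \<bar>f x\<bar> \<le> B)"

lemma bdd_measurable_mult: "bdd_measurable S f \<Longrightarrow> bdd_measurable S g \<Longrightarrow> bdd_measurable S (\<lambda>x. f x * g x)"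
proof -
  assume f: "bdd_measurable S f" and g: "bdd_measurable S g"
  then obtain B1 B2 where "\<forall>x\<in>S. \<bar>f x\<bar> \<le> B1" "\<forall>x\<in>S. \<bar>g x\<bar> \<le> B2" by (auto simp: bdd_measurable_def)
  then have "\<forall>x\<in>S. \<bar>f x * g x\<bar> \<le> B1 * B2" by (auto simp: abs_mult intro!: mult_mono)
  then show ?thesis using f g by (auto simp: bdd_measurable_def)
qed

lemma bdd_measurable_add: "bdd_measurable S f \<Longrightarrow> bdd_measurable S g \<Longrightarrow> bdd_measurable S (\<lambda>x. f x + g x)"
proof -
  assume f: "bdd_measurable S f" and g: "bdd_measurable S g"
  then obtain B1 B2 where "\<forall>x\<in>S. \<bar>f x\<bar> \<le> B1" "\<forall>x\<in>S. \<bar>g x\<bar> \<le> B2" by (auto simp: bdd_measurable_def)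
  then have "\<forall>x\<in>S. \<bar>f x + g x\<bar> \<le> B1 + B2" by (meson abs_triangle_ineq add_mono order_trans)
  then show ?thesis using f g by (auto simp: bdd_measurable_def)
qed

lemma bdd_measurable_uminus: "bdd_measurable S f \<Longrightarrow> bdd_measurable S (\<lambda>x. - f x)"
  by (auto simp: bdd_measurable_def)

lemma bdd_measurable_diff: "bdd_measurable S f \<Longrightarrow> bdd_measurable S g \<Longrightarrow> bdd_measurable S (\<lambda>x. f x - g x)"
  using bdd_measurable_add[OF _ bdd_measurable_uminus, of S f g] by simp

lemma bdd_measurable_const: "bdd_measurable S (\<lambda>x. c)"
  by (auto simp: bdd_measurable_def)

lemma bdd_measurable_indicator:
  assumes "A \<in> sets lebesgue" shows "bdd_measurable S (indicator A)"
proof -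
  have "indicator A \<in> borel_measurable lebesgue" using assms by (rule borel_measurable_indicator)
  then have "indicator A \<in> borel_measurable (lebesgue_on S)" by (rule measurable_restrict_space1)
  then show ?thesis unfolding bdd_measurable_def by (auto intro!: exI[of _ 1] simp: indicator_def)
qed

lemma bdd_measurable_subset: "bdd_measurable S f \<Longrightarrow> T \<subseteq> S \<Longrightarrow> bdd_measurable T f"
  unfolding bdd_measurable_def by (auto intro: measurable_restrict_mono)

lemma bdd_measurable_continuous:
  "continuous_on S g \<Longrightarrow> S \<in> sets lebesgue \<Longrightarrow> (\<And>x. x \<in> S \<Longrightarrow> \<bar>g x\<bar> \<le> B) \<Longrightarrow> bdd_measurable S g"
  unfolding bdd_measurable_def using continuous_imp_measurable_on_sets_lebesgue by blast

lemma bdd_measurable_continuous_subset: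
  "continuous_on A g \<Longrightarrow> (\<And>x. x \<in> A \<Longrightarrow> \<bar>g x\<bar> \<le> B) \<Longrightarrow> S \<subseteq> A \<Longrightarrow> S \<in> sets lebesgue
    \<Longrightarrow> bdd_measurable S g"
  by (intro bdd_measurable_continuous) (auto intro: continuous_on_subset)

lemma bdd_measurable_continuous_closure:
  assumes "continuous_on (closure A) g" "bounded S" "S \<subseteq> A" "S \<in> sets lebesgue"
  shows "bdd_measurable S g"
proof -
  obtain B where "\<And>x. x \<in> S \<Longrightarrow> \<bar>g x\<bar> \<le> B"
    using continuous_on_closure_bounded_abs[OF assms(1-3)] by blast
  moreover have "continuous_on S g"
    using assms(1,3) closure_subset continuous_on_subset by blast
  ultimately show ?thesis using assms(4) by (intro bdd_measurable_continuous)
qed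

lemma integrable_bdd_measurable:
  assumes "bounded S" "S \<in> sets lebesgue" "bdd_measurable S f"
  shows "integrable (lebesgue_on S) f"
proof -
  interpret finite_measure "lebesgue_on S" using assms(1,2) by (rule finite_measure_lebesgue_on_bounded)
  obtain B where "\<forall>x\<in>S. \<bar>f x\<bar> \<le> B" "f \<in> borel_measurable (lebesgue_on S)"
    using assms(3) by (auto simp: bdd_measurable_def)
  then show ?thesis by (intro integrable_const_bound[where B=B]) auto
qed

lemma integrable_mult_bdd_measurable:
  assumes g: "integrable (lebesgue_on S) g" and h: "bdd_measurable S h"
  shows "integrable (lebesgue_on S) (\<lambda>x. g x * h x)"
proof -
  obtain B where B: "\<And>x. x \<in> S \<Longrightarrow> \<bar>h x\<bar> \<le> B" and hm: "h \<in> borel_measurable (lebesgue_on S)"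
    using h by (auto simp: bdd_measurable_def)
  show ?thesis
  proof (rule Bochner_Integration.integrable_bound[OF integrable_mult_right[OF g, of "\<bar>B\<bar>"]])
    show "(\<lambda>x. g x * h x) \<in> borel_measurable (lebesgue_on S)" using g hm by measurable
    show "AE x in lebesgue_on S. norm (g x * h x) \<le> norm (\<bar>B\<bar> * g x)"
    proof (rule AE_I2)
      fix x assume "x \<in> space (lebesgue_on S)"
      then have "\<bar>h x\<bar> \<le> \<bar>B\<bar>" using B[of x] by auto
      then show "norm (g x * h x) \<le> norm (\<bar>B\<bar> * g x)"
        by (simp add: abs_mult) (metis abs_ge_zero mult.commute mult_left_mono)
    qed
  qed
qed

lemma square_integral_pos:
  assumes "L2 M \<psi>" "\<not> (AE x in M. \<psi> x = 0)"
  shows "(LINT x|M. (\<psi> x)\<^sup>2) > 0"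
proof -
  have "integrable M (\<lambda>x. (\<psi> x)\<^sup>2)" using assms(1) by (simp add: L2_def)
  then have "(LINT x|M. (\<psi> x)\<^sup>2) \<noteq> 0" using assms(2) by (simp add: integral_nonneg_eq_0_iff_AE)
  moreover have "0 \<le> (LINT x|M. (\<psi> x)\<^sup>2)" by simp
  ultimately show ?thesis by linarith
qed

lemma le_lambda_vI:
  assumes "\<And>\<psi>. L2 (lebesgue_on D) \<psi> \<Longrightarrow> \<not> (AE x in lebesgue_on D. \<psi> x = 0) \<Longrightarrow>
      l * (LINT x|lebesgue_on D. (\<psi> x)\<^sup>2) \<le> - (LINT x|lebesgue_on D. (nlop K D \<psi> x + a x * \<psi> x) * \<psi> x)"
  shows "ereal l \<le> lambda_v K a D"
  unfolding lambda_v_def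
proof (rule Inf_greatest, clarify)
  fix \<psi> assume \<psi>: "L2 (lebesgue_on D) \<psi>" "\<not> (AE x in lebesgue_on D. \<psi> x = 0)"
  then have "0 < (LINT x|lebesgue_on D. (\<psi> x)\<^sup>2)" by (rule square_integral_pos)
  with assms[OF \<psi>] show "ereal l \<le> ereal (- (LINT x|lebesgue_on D. (nlop K D \<psi> x + a x * \<psi> x) * \<psi> x)
      / (LINT x|lebesgue_on D. (\<psi> x)\<^sup>2))"
    by (metis ereal_less_eq(3) pos_le_divide_eq)
qed

lemma lambda_v_le_rayleigh:
  assumes "L2 (lebesgue_on D) \<psi>" "\<not> (AE x in lebesgue_on D. \<psi> x = 0)"
  shows "lambda_v K a D \<le> ereal (- (LINT x|lebesgue_on D. (nlop K D \<psi> x + a x * \<psi> x) * \<psi> x)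
    / (LINT x|lebesgue_on D. (\<psi> x)\<^sup>2))"
  unfolding lambda_v_def using assms by (intro Inf_lower) blast

subsection \<open>Growth of local $L^2$ masses\<close>

lemma polynomial_bound_excludes_geometric_growth:
  fixes m :: "real \<Rightarrow> real" and q C :: real and N k d :: nat
  assumes mono: "\<And>s s'. s \<le> s' \<Longrightarrow> m s \<le> m s'"
    and step: "\<And>n::nat. n \<ge> N \<Longrightarrow> q * m (real n - real k) \<le> m (real n + real k)"
    and q: "q > 1" and pos: "m (real N) > 0" and k: "k \<ge> 1"
    and bound: "\<And>s. s \<ge> 0 \<Longrightarrow> m s \<le> C * s ^ d"
  shows False
proof -
  define f where "f j = m (real N + 2 * real k * real j)" for j :: nat
  have f_step: "q * f j \<le> f (Suc j)" for j
  proof -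
    have st: "q * m (real (N + k + 2*k*j) - real k) \<le> m (real (N + k + 2*k*j) + real k)"
      by (rule step) simp
    have e1: "real (N + k + 2*k*j) + real k = real N + 2 * real k * real (Suc j)"
      and e2: "real (N + k + 2*k*j) - real k = real N + 2 * real k * real j"
      by (simp_all add: algebra_simps)
    show ?thesis unfolding f_def using st unfolding e1 e2 .
  qed
  have f_geometric: "q ^ j * f 0 \<le> f j" for j
  proof (induction j)
    case (Suc j)
    have "q ^ Suc j * f 0 = q * (q ^ j * f 0)" by simp
    also have "\<dots> \<le> q * f j" using Suc q by (intro mult_left_mono) auto
    also have "\<dots> \<le> f (Suc j)" by (rule f_step)
    finally show ?case .
  qed simp
  have "f 0 \<le> C * ((real N + 2 * real k * real j) ^ d / q ^ j)" for j
  proof -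
    have "q ^ j * f 0 \<le> C * (real N + 2 * real k * real j) ^ d"
      using f_geometric[of j] bound[of "real N + 2 * real k * real j"] by (simp add: f_def)
    moreover have "q ^ j > 0" using q by simp
    ultimately show ?thesis by (simp add: field_simps)
  qed
  moreover have "(\<lambda>j::nat. C * ((real N + 2 * real k * real j) ^ d / q ^ j)) \<longlonglongrightarrow> 0"
  proof -
    have "2 * real k > 0" using k by simp
    then have "(\<lambda>j::nat. (real N + 2 * real k * real j) ^ d / q ^ j) \<longlonglongrightarrow> 0"
      using q by real_asymp
    then show ?thesis by (rule tendsto_mult_right_zero)
  qed
  ultimately have "f 0 \<le> 0" by (intro LIMSEQ_le_const) auto
  then show False using pos by (simp add: f_def)
qed

definition L2_mass_ball :: "'a::euclidean_space set \<Rightarrow> ('a \<Rightarrow> real) \<Rightarrow> real \<Rightarrow> real" where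
  "L2_mass_ball \<Omega> h s = (LINT x|lebesgue_on (\<Omega> \<inter> ball 0 s). (h x)\<^sup>2)"

lemma Int_ball_sets:
  "open \<Omega> \<Longrightarrow> \<Omega> \<inter> ball 0 s \<subseteq> \<Omega> \<and> \<Omega> \<inter> ball 0 s \<in> sets lebesgue \<and> bounded (\<Omega> \<inter> ball 0 s)"
  by (auto simp: borel_open)

context
  fixes \<Omega> :: "'a::euclidean_space set" and h :: "'a \<Rightarrow> real" and B :: real
  assumes \<Omega>: "open \<Omega>" and h: "continuous_on \<Omega> h" "\<And>x. x \<in> \<Omega> \<Longrightarrow> \<bar>h x\<bar> \<le> B"
begin

lemma integrable_indicator_square_Int_ball:
  "A \<in> sets lebesgue \<Longrightarrow> integrable (lebesgue_on (\<Omega> \<inter> ball 0 s)) (\<lambda>x. indicator A x * (h x)\<^sup>2)"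
  using Int_ball_sets[OF \<Omega>, of s] unfolding power2_eq_square
  by (intro integrable_bdd_measurable bdd_measurable_mult bdd_measurable_indicator
      bdd_measurable_continuous_subset[OF h]) auto

lemma integrable_square_Int_ball: "integrable (lebesgue_on (\<Omega> \<inter> ball 0 s)) (\<lambda>x. (h x)\<^sup>2)"
  using integrable_indicator_square_Int_ball[of UNIV s] by simp

lemma L2_Int_ball: "L2 (lebesgue_on (\<Omega> \<inter> ball 0 s)) h"
proof -
  have "bdd_measurable (\<Omega> \<inter> ball 0 s) h"
    using Int_ball_sets[OF \<Omega>, of s] by (intro bdd_measurable_continuous_subset[OF h]) auto
  then show ?thesis using integrable_square_Int_ball by (simp add: L2_def bdd_measurable_def)
qed

lemma L2_mass_ball_diff:
  assumes "s \<le> s'"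
  shows "L2_mass_ball \<Omega> h s' - L2_mass_ball \<Omega> h s
    = (LINT x|lebesgue_on (\<Omega> \<inter> ball 0 s'). indicator (- ball 0 s) x * (h x)\<^sup>2)"
proof -
  let ?M = "lebesgue_on (\<Omega> \<inter> ball 0 s')"
  have sub: "\<Omega> \<inter> ball 0 s \<subseteq> \<Omega> \<inter> ball 0 s'" using assms by auto
  have sets: "\<Omega> \<inter> ball 0 s \<in> sets lebesgue" "\<Omega> \<inter> ball 0 s' \<in> sets lebesgue"
    using Int_ball_sets[OF \<Omega>] by auto
  have i: "integrable ?M (\<lambda>x. indicator (\<Omega> \<inter> ball 0 s) x * (h x)\<^sup>2)"
    by (rule integrable_indicator_square_Int_ball[OF sets(1)])
  have "L2_mass_ball \<Omega> h s = (LINT x|?M. indicator (\<Omega> \<inter> ball 0 s) x * (h x)\<^sup>2)"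
    unfolding L2_mass_ball_def by (rule integral_lebesgue_on_subset[OF sub sets])
  then have "L2_mass_ball \<Omega> h s' - L2_mass_ball \<Omega> h s
      = (LINT x|?M. (h x)\<^sup>2 - indicator (\<Omega> \<inter> ball 0 s) x * (h x)\<^sup>2)"
    unfolding L2_mass_ball_def using integrable_square_Int_ball i by simp
  also have "\<dots> = (LINT x|?M. indicator (- ball 0 s) x * (h x)\<^sup>2)"
    by (rule Bochner_Integration.integral_cong) (auto simp: indicator_def)
  finally show ?thesis .
qed

lemma L2_mass_ball_mono:
  assumes "s \<le> s'"
  shows "L2_mass_ball \<Omega> h s \<le> L2_mass_ball \<Omega> h s'"
proof -
  have "0 \<le> (LINT x|lebesgue_on (\<Omega> \<inter> ball 0 s'). indicator (- ball 0 s) x * (h x)\<^sup>2)"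
    by (intro integral_nonneg_AE AE_I2) (simp add: indicator_def)
  then show ?thesis using L2_mass_ball_diff[OF assms] by linarith
qed

lemma L2_mass_ball_le: "0 \<le> s \<Longrightarrow> L2_mass_ball \<Omega> h s \<le> B\<^sup>2 * unit_ball_vol DIM('a) * s ^ DIM('a)"
proof -
  assume s: "0 \<le> s"
  let ?S = "\<Omega> \<inter> ball (0::'a) s"
  have S: "?S \<subseteq> \<Omega>" "?S \<in> sets lebesgue" "bounded ?S" using Int_ball_sets[OF \<Omega>] by auto
  interpret finite_measure "lebesgue_on ?S" using S(3,2) by (rule finite_measure_lebesgue_on_bounded)
  have "L2_mass_ball \<Omega> h s \<le> (LINT x|lebesgue_on ?S. B\<^sup>2)"
    unfolding L2_mass_ball_def
  proof (rule integral_mono[OF integrable_square_Int_ball])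
    fix x assume "x \<in> space (lebesgue_on ?S)"
    then have "\<bar>h x\<bar> \<le> B" using h(2) by auto
    then show "(h x)\<^sup>2 \<le> B\<^sup>2" by (metis abs_ge_zero power2_abs power_mono)
  qed simp
  also have "\<dots> = measure lebesgue ?S * B\<^sup>2"
    using S by (simp add: measure_restrict_space)
  also have "measure lebesgue ?S \<le> measure lebesgue (ball (0::'a) s)"
    using S by (intro measure_mono_fmeasurable) auto
  also have "\<dots> = unit_ball_vol DIM('a) * s ^ DIM('a)" using s by (simp add: content_ball)
  finally show ?thesis by (simp add: mult_right_mono algebra_simps)
qed

lemma L2_mass_ball_pos:
  assumes "x0 \<in> \<Omega>" "h x0 \<noteq> 0" "norm x0 < s"
  shows "L2_mass_ball \<Omega> h s > 0"
proof -
  let ?S = "\<Omega> \<inter> ball (0::'a) s"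
  have "\<not> (AE x in lebesgue_on ?S. h x = 0)"
  proof
    assume "AE x in lebesgue_on ?S. h x = 0"
    then have "AE x in lebesgue_on ?S. \<bar>h x\<bar> \<le> 0" by (rule eventually_mono) simp
    moreover have "open ?S" "continuous_on ?S h" using \<Omega> h(1) by (auto intro: continuous_on_subset)
    ultimately have "\<bar>h x0\<bar> \<le> 0" using abs_le_if_AE_abs_le_open[of ?S h 0 x0] assms by auto
    then show False using assms(2) by simp
  qed
  with L2_Int_ball show ?thesis unfolding L2_mass_ball_def by (rule square_integral_pos)
qed

lemma L2_mass_ball_shell:
  assumes D: "D = \<Omega> \<inter> ball 0 t" and E: "E = \<Omega> \<inter> ball 0 (t + r)" and r: "0 < r"
  shows "(LINT x|lebesgue_on E. indicator (D - ball 0 (t - r)) x * (h x)\<^sup>2)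
      + (LINT x|lebesgue_on E. indicator (E - D) x * (h x)\<^sup>2)
    = L2_mass_ball \<Omega> h (t + r) - L2_mass_ball \<Omega> h (t - r)"
proof -
  have sets: "D - ball 0 (t - r) \<in> sets lebesgue" "E - D \<in> sets lebesgue"
    using Int_ball_sets[OF \<Omega>] by (auto simp: D E borel_open)
  have "(LINT x|lebesgue_on E. indicator (D - ball 0 (t - r)) x * (h x)\<^sup>2)
      + (LINT x|lebesgue_on E. indicator (E - D) x * (h x)\<^sup>2)
    = (LINT x|lebesgue_on E. indicator (D - ball 0 (t - r)) x * (h x)\<^sup>2 + indicator (E - D) x * (h x)\<^sup>2)"
    using integrable_indicator_square_Int_ball[OF sets(1)] integrable_indicator_square_Int_ball[OF sets(2)]
    unfolding E by (rule Bochner_Integration.integral_add[symmetric])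
  also have "\<dots> = (LINT x|lebesgue_on E. indicator (- ball 0 (t - r)) x * (h x)\<^sup>2)"
    using r by (intro Bochner_Integration.integral_cong) (auto simp: indicator_def D E)
  also have "\<dots> = L2_mass_ball \<Omega> h (t + r) - L2_mass_ball \<Omega> h (t - r)"
    using L2_mass_ball_diff[of "t - r" "t + r"] r by (simp add: E)
  finally show ?thesis .
qed

end

subsection \<open>The nonlocal operator of a compactly supported bounded kernel\<close>

locale nonlocal_kernel =
  fixes \<Omega> :: "'n::euclidean_space set" and K :: "'n \<Rightarrow> 'n \<Rightarrow> real" and r0 C0 :: real
  assumes Omega_open: "open \<Omega>" and Omega_nonempty: "\<Omega> \<noteq> {}"
    and K_nonneg: "\<And>x y. x \<in> \<Omega> \<Longrightarrow> y \<in> \<Omega> \<Longrightarrow> 0 \<le> K x y"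
    and K_le: "\<And>x y. x \<in> \<Omega> \<Longrightarrow> y \<in> \<Omega> \<Longrightarrow> K x y \<le> C0 * indicator (\<Omega> \<inter> ball x r0) y"
    and K_measurable: "\<And>x. x \<in> \<Omega> \<Longrightarrow> K x \<in> borel_measurable (lebesgue_on \<Omega>)"
    and K_ucont: "AE y in lebesgue_on \<Omega>. uniformly_continuous_on \<Omega> (\<lambda>x. K x y)"
    and K_sym: "\<And>x y. x \<in> \<Omega> \<Longrightarrow> y \<in> \<Omega> \<Longrightarrow> K x y = K y x"
    and C0_pos: "C0 > 0" and r0_pos: "r0 > 0"
begin

lemma Omega_sets_lebesgue: "\<Omega> \<in> sets lebesgue"
  using Omega_open by (simp add: borel_open)

lemma K_bounds: "x \<in> \<Omega> \<Longrightarrow> y \<in> \<Omega> \<Longrightarrow> 0 \<le> K x y \<and> K x y \<le> C0"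
  using K_nonneg[of x y] K_le[of x y] C0_pos by (cases "dist x y < r0") (auto simp: indicator_def)

lemma K_eq_0_far: "x \<in> \<Omega> \<Longrightarrow> y \<in> \<Omega> \<Longrightarrow> r0 \<le> dist x y \<Longrightarrow> K x y = 0"
  using K_nonneg[of x y] K_le[of x y] by (auto simp: indicator_def)

lemma K_measurable_on: "S \<subseteq> \<Omega> \<Longrightarrow> x \<in> \<Omega> \<Longrightarrow> K x \<in> borel_measurable (lebesgue_on S)"
  using measurable_restrict_mono[OF K_measurable] .

definition kernel_mass :: real where
  "kernel_mass = C0 * measure lborel (ball (0::'n) r0)"

lemma kernel_mass_pos: "kernel_mass > 0"
  unfolding kernel_mass_def using content_ball_pos[OF r0_pos, of 0] C0_pos by simp

definition discont_fibres :: "'n set" where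
  "discont_fibres = (SOME N. N \<in> null_sets lebesgue \<and> (\<forall>y\<in>\<Omega>-N. continuous_on \<Omega> (\<lambda>x. K x y)))"

lemma discont_fibres:
  "discont_fibres \<in> null_sets lebesgue"
  "\<And>y. y \<in> \<Omega> \<Longrightarrow> y \<notin> discont_fibres \<Longrightarrow> continuous_on \<Omega> (\<lambda>x. K x y)"
proof -
  have "AE y in lebesgue. y \<in> \<Omega> \<longrightarrow> uniformly_continuous_on \<Omega> (\<lambda>x. K x y)"
    using K_ucont Omega_sets_lebesgue by (simp add: AE_restrict_space_iff)
  then obtain N where "N \<in> null_sets lebesgue"
    "{y \<in> space lebesgue. \<not> (y \<in> \<Omega> \<longrightarrow> uniformly_continuous_on \<Omega> (\<lambda>x. K x y))} \<subseteq> N"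
    by (auto simp: eventually_ae_filter)
  then have "\<exists>N. N \<in> null_sets lebesgue \<and> (\<forall>y\<in>\<Omega>-N. continuous_on \<Omega> (\<lambda>x. K x y))"
    by (intro exI[of _ N]) (auto intro: uniformly_continuous_imp_continuous)
  from someI_ex[OF this] show "discont_fibres \<in> null_sets lebesgue"
    "\<And>y. y \<in> \<Omega> \<Longrightarrow> y \<notin> discont_fibres \<Longrightarrow> continuous_on \<Omega> (\<lambda>x. K x y)"
    unfolding discont_fibres_def by auto
qed

text \<open>Removing the null set of fibres \<open>K(\<cdot>,y)\<close> that are not continuous turns \<open>K\<close> into a
  Caratheodory function, hence a jointly measurable one, without changing any integral
  \<open>\<integral> K(x,y) f(y) dy\<close>; this is what makes Fubini applicable.\<close>

definition Kreg :: "'n \<Rightarrow> 'n \<Rightarrow> real" where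
  "Kreg x y = (if y \<in> discont_fibres then 0 else K x y)"

lemma Kreg_bounds: "x \<in> \<Omega> \<Longrightarrow> y \<in> \<Omega> \<Longrightarrow> 0 \<le> Kreg x y \<and> Kreg x y \<le> C0"
  using K_bounds[of x y] C0_pos by (auto simp: Kreg_def)

lemma Kreg_measurable_on:
  assumes "S \<subseteq> \<Omega>" "x \<in> \<Omega>"
  shows "Kreg x \<in> borel_measurable (lebesgue_on S)"
proof -
  have "indicator (- discont_fibres) \<in> borel_measurable (lebesgue_on S)"
    using discont_fibres(1) by (intro measurable_restrict_space1) (auto simp: Compl_eq_Diff_UNIV)
  then have "(\<lambda>y. indicator (- discont_fibres) y * K x y) \<in> borel_measurable (lebesgue_on S)"
    using K_measurable_on[OF assms] by measurable
  then show ?thesis by (rule measurable_cong[THEN iffD1, rotated]) (auto simp: Kreg_def indicator_def)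
qed

lemma Kreg_jointly_measurable:
  assumes D: "D \<subseteq> \<Omega>" "D \<in> sets lebesgue"
  shows "(\<lambda>z. Kreg (fst z) (snd z)) \<in> borel_measurable (lebesgue_on D \<Otimes>\<^sub>M lebesgue_on D)"
proof -
  let ?M = "lebesgue_on D \<Otimes>\<^sub>M lebesgue_on D"
  obtain d :: "nat \<Rightarrow> 'n" where d: "range d \<subseteq> \<Omega>" "\<And>x e. x \<in> \<Omega> \<Longrightarrow> e > 0 \<Longrightarrow> \<exists>i. dist x (d i) < e"
    using dense_sequence_in_open[OF Omega_open Omega_nonempty] by blast
  define idx where "idx k x = (LEAST i. dist x (d i) < inverse (real (Suc k)))" for k x
  have meas_i: "Kreg (d i) \<in> borel_measurable (lebesgue_on D)" for i
    using Kreg_measurable_on[OF D(1)] d(1) by auto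
  have "(\<lambda>x. dist x c) \<in> borel_measurable (lebesgue_on D)" for c :: 'n
    by (rule continuous_imp_measurable_on_sets_lebesgue[OF _ D(2)]) (intro continuous_intros)
  then have "idx k \<in> lebesgue_on D \<rightarrow>\<^sub>M count_space UNIV" for k
    unfolding idx_def by measurable
  then have idx_meas: "(\<lambda>z. idx k (fst z)) \<in> ?M \<rightarrow>\<^sub>M count_space UNIV" for k
    by measurable
  have approx: "(\<lambda>z. Kreg (d (idx k (fst z))) (snd z)) \<in> borel_measurable ?M" for k
    by (rule measurable_compose_countable[OF _ idx_meas]) (use meas_i in measurable)
  show ?thesis
  proof (rule borel_measurable_LIMSEQ_real[OF _ approx])
    fix z assume "z \<in> space ?M"
    then obtain x y where z: "z = (x,y)" "x \<in> D" "y \<in> D" by (auto simp: space_pair_measure)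
    have x: "x \<in> \<Omega>" using z D by auto
    have "dist x (d (idx k x)) < inverse (real (Suc k))" for k
      unfolding idx_def by (rule LeastI_ex) (use d(2)[OF x] in auto)
    then have "(\<lambda>k. dist (d (idx k x)) x) \<longlonglongrightarrow> 0"
      by (intro Lim_null_comparison[OF always_eventually LIMSEQ_inverse_real_of_nat])
        (simp add: dist_commute less_imp_le)
    then have conv: "(\<lambda>k. d (idx k x)) \<longlonglongrightarrow> x"
      by (rule tendsto_dist_iff[THEN iffD2])
    show "(\<lambda>k. Kreg (d (idx k (fst z))) (snd z)) \<longlonglongrightarrow> Kreg (fst z) (snd z)"
    proof (cases "y \<in> discont_fibres")
      case False
      have "(\<lambda>k. K (d (idx k x)) y) \<longlonglongrightarrow> K x y"
        by (rule continuous_on_tendsto_compose[OF discont_fibres(2) conv x])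
          (use False z D range_subsetD[OF d(1)] in auto)
      then show ?thesis using z False by (simp add: Kreg_def)
    qed (use z in \<open>simp add: Kreg_def\<close>)
  qed
qed

lemma nlop_local:
  assumes x: "x \<in> \<Omega>" and T: "T \<subseteq> \<Omega>" "T \<in> sets lebesgue" "\<Omega> \<inter> ball x r0 \<subseteq> T"
  shows "nlop K \<Omega> f x = nlop K T f x"
proof -
  have "nlop K T f x = (LINT y|lebesgue_on \<Omega>. indicator T y * (K x y * f y))"
    unfolding nlop_def by (rule integral_lebesgue_on_subset[OF T(1,2) Omega_sets_lebesgue])
  also have "\<dots> = nlop K \<Omega> f x"
    unfolding nlop_def
  proof (rule Bochner_Integration.integral_cong[OF refl])
    fix y assume y: "y \<in> space (lebesgue_on \<Omega>)"
    show "indicator T y * (K x y * f y) = K x y * f y"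
    proof (cases "y \<in> T")
      case False
      then have "r0 \<le> dist x y" using T(3) y by (auto simp: not_less)
      then show ?thesis using K_eq_0_far[OF x] y False by auto
    qed simp
  qed
  finally show ?thesis ..
qed

lemma nlop_eq_nlop_Int_ball:
  assumes "x \<in> \<Omega> \<inter> ball 0 t"
  shows "nlop K \<Omega> f x = nlop K (\<Omega> \<inter> ball 0 (t + r0)) f x"
  using assms Omega_open by (intro nlop_local Int_ball_subset_Int_ball_add) (auto simp: borel_open)

lemma nlop_indicator_eq_0_far:
  assumes "x \<in> \<Omega>" "S \<subseteq> \<Omega>" "\<And>y. y \<in> A \<inter> S \<Longrightarrow> r0 \<le> dist x y"
  shows "nlop K S (indicator A) x = 0"
proof -
  have "nlop K S (indicator A) x = (LINT y|lebesgue_on S. 0)"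
    unfolding nlop_def using assms K_eq_0_far
    by (intro Bochner_Integration.integral_cong) (auto simp: indicator_def)
  then show ?thesis by simp
qed

context
  fixes S assumes S: "S \<subseteq> \<Omega>" "S \<in> sets lebesgue" "bounded S"
begin

lemma AE_notin_discont_fibres: "AE y in lebesgue_on S. y \<notin> discont_fibres"
proof -
  have "AE y in lebesgue. y \<in> S \<longrightarrow> y \<notin> discont_fibres"
    using AE_not_in[OF discont_fibres(1)] by (rule eventually_mono) simp
  then show ?thesis using S(2) by (simp add: AE_restrict_space_iff)
qed

lemma integrable_K_mult:
  assumes "x \<in> \<Omega>" "integrable (lebesgue_on S) f"
  shows "integrable (lebesgue_on S) (\<lambda>y. K x y * f y)"
proof (rule Bochner_Integration.integrable_bound[OF integrable_mult_right[OF assms(2), of C0]])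
  show "(\<lambda>y. K x y * f y) \<in> borel_measurable (lebesgue_on S)"
    using K_measurable_on[OF S(1) assms(1)] assms(2) by measurable
  show "AE y in lebesgue_on S. norm (K x y * f y) \<le> norm (C0 * f y)"
    by (rule AE_I2) (use K_bounds[OF assms(1)] S C0_pos in \<open>auto simp: abs_mult intro!: mult_right_mono\<close>)
qed

lemma integrable_Kreg_mult:
  assumes "x \<in> \<Omega>" "integrable (lebesgue_on S) f"
  shows "integrable (lebesgue_on S) (\<lambda>y. Kreg x y * f y)"
proof (rule Bochner_Integration.integrable_bound[OF integrable_mult_right[OF assms(2), of C0]])
  show "(\<lambda>y. Kreg x y * f y) \<in> borel_measurable (lebesgue_on S)"
    using Kreg_measurable_on[OF S(1) assms(1)] assms(2) by measurable
  show "AE y in lebesgue_on S. norm (Kreg x y * f y) \<le> norm (C0 * f y)"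
    by (rule AE_I2) (use Kreg_bounds[OF assms(1)] S C0_pos in \<open>auto simp: abs_mult intro!: mult_right_mono\<close>)
qed

lemma abs_nlop_le:
  assumes "x \<in> \<Omega>" "integrable (lebesgue_on S) f"
  shows "\<bar>nlop K S f x\<bar> \<le> C0 * (LINT y|lebesgue_on S. \<bar>f y\<bar>)"
proof -
  have "\<bar>nlop K S f x\<bar> \<le> (LINT y|lebesgue_on S. C0 * \<bar>f y\<bar>)"
    unfolding nlop_def
    by (rule integral_abs_bound_integral[OF integrable_K_mult[OF assms]])
       (use assms K_bounds[OF assms(1)] S C0_pos in \<open>auto simp: abs_mult intro!: mult_right_mono\<close>)
  then show ?thesis by simp
qed

lemma nlop_eq_Kreg:
  assumes "x \<in> \<Omega>" "f \<in> borel_measurable (lebesgue_on S)"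
  shows "nlop K S f x = (LINT y|lebesgue_on S. Kreg x y * f y)"
  unfolding nlop_def
proof (rule integral_cong_AE)
  show "(\<lambda>y. K x y * f y) \<in> borel_measurable (lebesgue_on S)"
    using K_measurable_on[OF S(1) assms(1)] assms(2) by measurable
  show "(\<lambda>y. Kreg x y * f y) \<in> borel_measurable (lebesgue_on S)"
    using Kreg_measurable_on[OF S(1) assms(1)] assms(2) by measurable
  show "AE y in lebesgue_on S. K x y * f y = Kreg x y * f y"
    using AE_notin_discont_fibres by (rule eventually_mono) (simp add: Kreg_def)
qed

lemma nlop_measurable:
  assumes f: "integrable (lebesgue_on S) f"
  shows "nlop K S f \<in> borel_measurable (lebesgue_on S)"
proof -
  interpret finite_measure "lebesgue_on S" using S(3,2) by (rule finite_measure_lebesgue_on_bounded)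
  have "case_prod (\<lambda>x y. Kreg x y * f y) \<in> borel_measurable (lebesgue_on S \<Otimes>\<^sub>M lebesgue_on S)"
    using Kreg_jointly_measurable[OF S(1,2)] f by (simp add: case_prod_beta') measurable
  then have "(\<lambda>x. LINT y|lebesgue_on S. Kreg x y * f y) \<in> borel_measurable (lebesgue_on S)"
    by (rule borel_measurable_lebesgue_integral)
  then show ?thesis
    by (rule measurable_cong[THEN iffD1, rotated]) (use nlop_eq_Kreg f S in auto)
qed

lemma bdd_measurable_nlop: "integrable (lebesgue_on S) f \<Longrightarrow> bdd_measurable S (nlop K S f)"
  unfolding bdd_measurable_def using abs_nlop_le nlop_measurable S(1) by blast

lemma Kreg_product_measurable:
  assumes "u \<in> borel_measurable (lebesgue_on S)" "v \<in> borel_measurable (lebesgue_on S)"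
  shows "(\<lambda>(x, y). u x * (Kreg x y * v y)) \<in> borel_measurable (lebesgue_on S \<Otimes>\<^sub>M lebesgue_on S)"
  using Kreg_jointly_measurable[OF S(1,2)] assms by (simp add: case_prod_beta') measurable

lemma Kreg_product_integrable:
  assumes u: "bdd_measurable S u" and v: "integrable (lebesgue_on S) v"
  shows "integrable (lebesgue_on S \<Otimes>\<^sub>M lebesgue_on S) (\<lambda>(x, y). u x * (Kreg x y * v y))"
proof -
  let ?M = "lebesgue_on S"
  interpret finite_measure ?M using S(3,2) by (rule finite_measure_lebesgue_on_bounded)
  interpret P: pair_sigma_finite ?M ?M by intro_locales
  obtain B where B: "\<And>x. x \<in> S \<Longrightarrow> \<bar>u x\<bar> \<le> B" and um: "u \<in> borel_measurable ?M"
    using u by (auto simp: bdd_measurable_def)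
  have vm: "v \<in> borel_measurable ?M" using v by measurable
  define F where "F = (\<lambda>x y. u x * (Kreg x y * v y))"
  have Fm: "case_prod F \<in> borel_measurable (?M \<Otimes>\<^sub>M ?M)"
    unfolding F_def by (rule Kreg_product_measurable[OF um vm])
  have Fx: "integrable ?M (F x)" if "x \<in> S" for x
    unfolding F_def using integrable_Kreg_mult[OF _ v, of x] that S(1) by auto
  have norm_int: "integrable ?M (\<lambda>x. \<integral>y. norm (F x y) \<partial>?M)"
  proof (rule integrable_const_bound[where B="B * (C0 * (LINT y|?M. \<bar>v y\<bar>))"])
    show "AE x in ?M. norm (\<integral>y. norm (F x y) \<partial>?M) \<le> B * (C0 * (LINT y|?M. \<bar>v y\<bar>))"
    proof (rule AE_I2)
      fix x assume x: "x \<in> space ?M"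
      have "norm (\<integral>y. norm (F x y) \<partial>?M) = (\<integral>y. \<bar>F x y\<bar> \<partial>?M)"
        by (simp add: integral_nonneg_AE)
      also have "\<dots> \<le> (\<integral>y. B * (C0 * \<bar>v y\<bar>) \<partial>?M)"
      proof (rule integral_mono)
        show "integrable ?M (\<lambda>y. \<bar>F x y\<bar>)" using Fx x by auto
        show "integrable ?M (\<lambda>y. B * (C0 * \<bar>v y\<bar>))" using v by auto
        fix y assume y: "y \<in> space ?M"
        have "0 \<le> Kreg x y" "Kreg x y \<le> C0" using Kreg_bounds[of x y] x y S(1) by auto
        then have "\<bar>u x\<bar> * (\<bar>Kreg x y\<bar> * \<bar>v y\<bar>) \<le> B * (C0 * \<bar>v y\<bar>)"
          using B[of x] x by (intro mult_mono) (auto intro: mult_right_mono)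
        then show "\<bar>F x y\<bar> \<le> B * (C0 * \<bar>v y\<bar>)" by (simp add: F_def abs_mult)
      qed
      finally show "norm (\<integral>y. norm (F x y) \<partial>?M) \<le> B * (C0 * (LINT y|?M. \<bar>v y\<bar>))" by simp
    qed
    have "case_prod (\<lambda>x y. norm (F x y)) \<in> borel_measurable (?M \<Otimes>\<^sub>M ?M)"
      using Fm by (simp add: case_prod_beta') measurable
    then show "(\<lambda>x. \<integral>y. norm (F x y) \<partial>?M) \<in> borel_measurable ?M"
      by (simp add: borel_measurable_lebesgue_integral)
  qed
  have "integrable (?M \<Otimes>\<^sub>M ?M) (case_prod F)"
  proof (rule P.Fubini_integrable[OF Fm])
    show "integrable ?M (\<lambda>x. \<integral>y. norm (case_prod F (x, y)) \<partial>?M)" using norm_int by simp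
    show "AE x in ?M. integrable ?M (\<lambda>y. case_prod F (x, y))" using Fx by (intro AE_I2) simp
  qed
  then show ?thesis by (simp add: F_def)
qed

lemma nlop_symmetric:
  assumes u: "bdd_measurable S u" and v: "integrable (lebesgue_on S) v"
  shows "(LINT x|lebesgue_on S. u x * nlop K S v x) = (LINT x|lebesgue_on S. v x * nlop K S u x)"
proof -
  let ?M = "lebesgue_on S"
  interpret finite_measure ?M using S(3,2) by (rule finite_measure_lebesgue_on_bounded)
  interpret P: pair_sigma_finite ?M ?M by intro_locales
  have um: "u \<in> borel_measurable ?M" using u by (simp add: bdd_measurable_def)
  have vm: "v \<in> borel_measurable ?M" using v by measurable
  define F where "F = (\<lambda>x y. u x * (Kreg x y * v y))"
  have Fm: "case_prod F \<in> borel_measurable (?M \<Otimes>\<^sub>M ?M)"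
    unfolding F_def using Kreg_product_measurable[OF um vm] .
  have Fint: "integrable (?M \<Otimes>\<^sub>M ?M) (case_prod F)"
    unfolding F_def using Kreg_product_integrable[OF u v] .
  have "(LINT x|?M. u x * nlop K S v x) = (\<integral>x. (\<integral>y. F x y \<partial>?M) \<partial>?M)"
    using nlop_eq_Kreg[OF _ vm] S(1) by (intro Bochner_Integration.integral_cong) (auto simp: F_def)
  also have "\<dots> = (\<integral>y. (\<integral>x. F x y \<partial>?M) \<partial>?M)"
    by (rule P.Fubini_integral[OF Fint, symmetric])
  also have "\<dots> = (LINT y|?M. v y * nlop K S u y)"
  proof (rule integral_cong_AE)
    show "(\<lambda>y. v y * nlop K S u y) \<in> borel_measurable ?M"
      using nlop_measurable[OF integrable_bdd_measurable[OF S(3,2) u]] vm by measurable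
    have "case_prod (\<lambda>y x. F x y) \<in> borel_measurable (?M \<Otimes>\<^sub>M ?M)"
      using Fm measurable_pair_swap_iff[of "case_prod F" ?M ?M borel] by (simp add: case_prod_beta')
    then show "(\<lambda>y. \<integral>x. F x y \<partial>?M) \<in> borel_measurable ?M"
      by (rule borel_measurable_lebesgue_integral)
    have "AE y in ?M. y \<notin> discont_fibres \<and> y \<in> S"
      using AE_notin_discont_fibres AE_space[of ?M] by eventually_elim simp
    then show "AE y in ?M. (\<integral>x. F x y \<partial>?M) = v y * nlop K S u y"
    proof (rule eventually_mono)
      fix y assume y: "y \<notin> discont_fibres \<and> y \<in> S"
      have "nlop K S u y = (\<integral>x. Kreg x y * u x \<partial>?M)"
        unfolding nlop_def using y S(1) K_sym
        by (intro Bochner_Integration.integral_cong) (auto simp: Kreg_def)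
      have "(\<integral>x. F x y \<partial>?M) = (\<integral>x. v y * (Kreg x y * u x) \<partial>?M)"
        by (rule Bochner_Integration.integral_cong) (simp_all add: F_def)
      with \<open>nlop K S u y = _\<close> show "(\<integral>x. F x y \<partial>?M) = v y * nlop K S u y"
        by simp
    qed
  qed
  finally show ?thesis .
qed

lemma nlop_le_kernel_mass:
  assumes x: "x \<in> \<Omega>" and g: "bdd_measurable S g" "\<And>y. y \<in> S \<Longrightarrow> 0 \<le> g y \<and> g y \<le> 1"
  shows "nlop K S g x \<le> kernel_mass"
proof -
  have "nlop K S g x \<le> (LINT y|lebesgue_on S. C0 * indicator (ball x r0) y)"
    unfolding nlop_def
  proof (rule integral_mono)
    show "integrable (lebesgue_on S) (\<lambda>y. K x y * g y)"
      by (rule integrable_K_mult[OF x integrable_bdd_measurable[OF S(3,2) g(1)]])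
    show "integrable (lebesgue_on S) (\<lambda>y. C0 * indicator (ball x r0) y)"
      using integrable_bdd_measurable[OF S(3,2) bdd_measurable_indicator[of "ball x r0"]]
      by (simp add: borel_open)
    fix y assume y: "y \<in> space (lebesgue_on S)"
    then have yO: "y \<in> \<Omega>" using S by auto
    have "K x y * g y \<le> K x y" using g(2)[of y] y K_nonneg[OF x yO] by (auto intro: mult_left_le)
    also have "\<dots> \<le> C0 * indicator (ball x r0) y"
      using K_le[OF x yO] C0_pos yO by (auto simp: indicator_def)
    finally show "K x y * g y \<le> C0 * indicator (ball x r0) y" .
  qed
  also have "\<dots> \<le> kernel_mass"
    unfolding kernel_mass_def using integral_indicator_ball_le[OF S(3,2), of x r0] C0_pos by simp
  finally show ?thesis .
qed

end

end

subsection \<open>Positive supersolutions and the lower bound\<close>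

context nonlocal_kernel
begin

lemma nlop_split:
  assumes E: "E \<subseteq> \<Omega>" "E \<in> sets lebesgue" "bounded E" and D: "D \<subseteq> E" "D \<in> sets lebesgue"
    and x: "x \<in> \<Omega>" and f: "bdd_measurable E f"
  shows "nlop K D f x + nlop K E (\<lambda>y. indicator (E - D) y * f y) x = nlop K E f x"
proof -
  have "bdd_measurable E (\<lambda>y. indicator (E - D) y * f y)"
    using E(2) D(2) by (intro bdd_measurable_mult bdd_measurable_indicator f) auto
  then have int: "integrable (lebesgue_on E) (\<lambda>y. K x y * (indicator (E - D) y * f y))"
    "integrable (lebesgue_on E) (\<lambda>y. K x y * f y)"
    using integrable_K_mult[OF E x] integrable_bdd_measurable[OF E(3,2)] f by auto
  have "nlop K D f x = (LINT y|lebesgue_on E. indicator D y * (K x y * f y))"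
    unfolding nlop_def by (rule integral_lebesgue_on_subset[OF D(1,2) E(2)])
  also have "\<dots> = (LINT y|lebesgue_on E. K x y * f y - K x y * (indicator (E - D) y * f y))"
    using D(1) by (intro Bochner_Integration.integral_cong) (auto simp: indicator_def)
  also have "\<dots> = nlop K E f x - nlop K E (\<lambda>y. indicator (E - D) y * f y) x"
    unfolding nlop_def using int by simp
  finally show ?thesis by simp
qed

lemma nlop_mono_domain:
  assumes E: "E \<subseteq> \<Omega>" "E \<in> sets lebesgue" "bounded E" and D: "D \<subseteq> E" "D \<in> sets lebesgue"
    and x: "x \<in> \<Omega>" and f: "bdd_measurable E f" "\<And>y. y \<in> E \<Longrightarrow> 0 \<le> f y"
  shows "nlop K D f x \<le> nlop K E f x"
proof -
  have "0 \<le> nlop K E (\<lambda>y. indicator (E - D) y * f y) x"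
    unfolding nlop_def using K_nonneg[OF x] E(1) f(2)
    by (intro integral_nonneg_AE AE_I2) (auto simp: indicator_def)
  then show ?thesis using nlop_split[OF E D x f(1)] by linarith
qed

lemma picone_pointwise:
  assumes D: "D \<subseteq> \<Omega>" "D \<in> sets lebesgue" "bounded D"
    and h: "integrable (lebesgue_on D) h" "\<And>y. y \<in> D \<Longrightarrow> 0 < h y"
    and \<psi>: "integrable (lebesgue_on D) \<psi>" and wi: "integrable (lebesgue_on D) (\<lambda>y. (\<psi> y)\<^sup>2 / h y)"
    and x: "x \<in> D"
  shows "\<psi> x * nlop K D \<psi> x
    \<le> ((\<psi> x)\<^sup>2 / h x * nlop K D h x + h x * nlop K D (\<lambda>y. (\<psi> y)\<^sup>2 / h y) x) / 2"
proof -
  let ?M = "lebesgue_on D"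
  define w where "w = (\<lambda>y. (\<psi> y)\<^sup>2 / h y)"
  have xO: "x \<in> \<Omega>" using x D(1) by auto
  have kh: "integrable ?M (\<lambda>y. K x y * h y)" by (rule integrable_K_mult[OF D xO h(1)])
  have kw: "integrable ?M (\<lambda>y. K x y * w y)" unfolding w_def by (rule integrable_K_mult[OF D xO wi])
  have "\<psi> x * nlop K D \<psi> x = (\<integral>y. \<psi> x * (K x y * \<psi> y) \<partial>?M)" by (simp add: nlop_def)
  also have "\<dots> \<le> (\<integral>y. (w x * (K x y * h y) + h x * (K x y * w y)) / 2 \<partial>?M)"
  proof (rule integral_mono)
    show "integrable ?M (\<lambda>y. \<psi> x * (K x y * \<psi> y))" using integrable_K_mult[OF D xO \<psi>] by auto
    show "integrable ?M (\<lambda>y. (w x * (K x y * h y) + h x * (K x y * w y)) / 2)" using kh kw by auto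
    fix y assume "y \<in> space ?M"
    then have y: "y \<in> D" by simp
    have "\<psi> x * (K x y * \<psi> y) = K x y * (\<psi> x * \<psi> y)" by simp
    also have "\<dots> \<le> K x y * ((1/2) * ((\<psi> x)\<^sup>2 / h x * h y) + (1/2) * (h x * ((\<psi> y)\<^sup>2 / h y)))"
      using weighted_young[OF h(2)[OF x] h(2)[OF y]] K_nonneg[OF xO] y D(1) by (intro mult_left_mono) auto
    also have "\<dots> = (w x * (K x y * h y) + h x * (K x y * w y)) / 2"
      using h(2)[OF x] h(2)[OF y] by (simp add: w_def field_simps)
    finally show "\<psi> x * (K x y * \<psi> y) \<le> (w x * (K x y * h y) + h x * (K x y * w y)) / 2" .
  qed
  also have "\<dots> = (w x * nlop K D h x + h x * nlop K D w x) / 2"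
    using kh kw by (simp add: nlop_def)
  finally show ?thesis by (simp add: w_def)
qed

lemma quadratic_form_le_of_supersolution:
  assumes D: "D \<subseteq> \<Omega>" "D \<in> sets lebesgue" "bounded D"
    and h: "bdd_measurable D h" "m > 0" "\<And>x. x \<in> D \<Longrightarrow> m \<le> h x"
    and c: "bdd_measurable D c" and super: "\<And>x. x \<in> D \<Longrightarrow> nlop K D h x \<le> c x * h x"
    and \<psi>: "\<psi> \<in> borel_measurable (lebesgue_on D)" "integrable (lebesgue_on D) (\<lambda>x. (\<psi> x)\<^sup>2)"
  shows "(LINT x|lebesgue_on D. \<psi> x * nlop K D \<psi> x) \<le> (LINT x|lebesgue_on D. c x * (\<psi> x)\<^sup>2)"
proof -
  let ?M = "lebesgue_on D"
  interpret finite_measure ?M using D(3,2) by (rule finite_measure_lebesgue_on_bounded)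
  have \<psi>i: "integrable ?M \<psi>" using \<psi> by (rule square_integrable_imp_integrable)
  have hi: "integrable ?M h" by (rule integrable_bdd_measurable[OF D(3,2) h(1)])
  have hpos: "x \<in> D \<Longrightarrow> h x > 0" for x using h(2,3) by fastforce
  define w where "w = (\<lambda>x. (\<psi> x)\<^sup>2 / h x)"
  have wi: "integrable ?M w"
  proof (rule Bochner_Integration.integrable_bound[OF integrable_mult_right[OF \<psi>(2), of "1/m"]])
    have "h \<in> borel_measurable ?M" using h(1) by (simp add: bdd_measurable_def)
    then show "w \<in> borel_measurable ?M" unfolding w_def using \<psi>(1) by measurable
    show "AE x in ?M. norm (w x) \<le> norm (1 / m * (\<psi> x)\<^sup>2)"
    proof (rule AE_I2)
      fix x assume "x \<in> space ?M"
      then have "m \<le> h x" "0 < h x" using h(3) hpos by auto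
      then have "(\<psi> x)\<^sup>2 / h x \<le> (\<psi> x)\<^sup>2 / m" using h(2) by (intro divide_left_mono) auto
      then show "norm (w x) \<le> norm (1 / m * (\<psi> x)\<^sup>2)" using \<open>0 < h x\<close> h(2) by (simp add: w_def)
    qed
  qed
  have nlop_int: "integrable ?M (\<lambda>x. f x * nlop K D g x)"
    if "integrable ?M f" "integrable ?M g" for f g
    using integrable_mult_bdd_measurable[OF that(1) bdd_measurable_nlop[OF D that(2)]] .
  have pointwise: "\<psi> x * nlop K D \<psi> x \<le> (w x * nlop K D h x + h x * nlop K D w x) / 2"
    if "x \<in> D" for x
    using picone_pointwise[OF D hi hpos \<psi>i wi[unfolded w_def] that] by (simp add: w_def)
  have "(LINT x|?M. \<psi> x * nlop K D \<psi> x) \<le> (LINT x|?M. (w x * nlop K D h x + h x * nlop K D w x) / 2)"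
    using pointwise nlop_int \<psi>i hi wi by (intro integral_mono) auto
  also have "\<dots> = ((LINT x|?M. w x * nlop K D h x) + (LINT x|?M. h x * nlop K D w x)) / 2"
    using nlop_int hi wi by simp
  also have "(LINT x|?M. h x * nlop K D w x) = (LINT x|?M. w x * nlop K D h x)"
    by (rule nlop_symmetric[OF D h(1) wi])
  also have "(LINT x|?M. w x * nlop K D h x) \<le> (LINT x|?M. c x * (\<psi> x)\<^sup>2)"
  proof (rule integral_mono)
    show "integrable ?M (\<lambda>x. w x * nlop K D h x)" using nlop_int wi hi by blast
    show "integrable ?M (\<lambda>x. c x * (\<psi> x)\<^sup>2)"
      using integrable_mult_bdd_measurable[OF \<psi>(2) c] by (simp add: mult.commute)
    fix x assume "x \<in> space ?M"
    then have x: "x \<in> D" by simp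
    have "w x * nlop K D h x \<le> w x * (c x * h x)"
      using super[OF x] hpos[OF x] by (intro mult_left_mono) (auto simp: w_def)
    then show "w x * nlop K D h x \<le> c x * (\<psi> x)\<^sup>2" using hpos[OF x] by (simp add: w_def mult.commute)
  qed
  finally show ?thesis by simp
qed

lemma le_lambda_v_of_supersolution:
  assumes a: "continuous_on (closure \<Omega>) a"
    and h: "continuous_on (closure \<Omega>) h" "\<And>x. x \<in> closure \<Omega> \<Longrightarrow> 0 < h x"
    and super: "\<And>x. x \<in> \<Omega> \<Longrightarrow> nlop K \<Omega> h x + a x * h x + l * h x \<le> 0"
  shows "ereal l \<le> lambda_v K a (\<Omega> \<inter> ball 0 r)"
proof -
  define D where "D = \<Omega> \<inter> ball 0 r"
  define E where "E = \<Omega> \<inter> ball 0 (r + r0)"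
  have D: "D \<subseteq> \<Omega>" "D \<in> sets lebesgue" "bounded D" and E: "E \<subseteq> \<Omega>" "E \<in> sets lebesgue" "bounded E"
    and DE: "D \<subseteq> E"
    using Omega_open r0_pos by (auto simp: D_def E_def borel_open)
  let ?M = "lebesgue_on D"
  obtain m where m: "m > 0" "\<And>x. x \<in> D \<Longrightarrow> m \<le> h x"
    using continuous_on_closure_positive_lower_bound[OF h D(3,1)] by blast
  have bh: "bdd_measurable D h" and ba: "bdd_measurable D a"
    using bdd_measurable_continuous_closure D h(1) a by blast+
  have bc: "bdd_measurable D (\<lambda>x. - (a x + l))"
    by (intro bdd_measurable_uminus bdd_measurable_add ba bdd_measurable_const)
  have super_D: "nlop K D h x \<le> - (a x + l) * h x" if x: "x \<in> D" for x
  proof -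
    have "bdd_measurable E h" by (rule bdd_measurable_continuous_closure[OF h(1) E(3,1,2)])
    moreover have "0 \<le> h y" if "y \<in> E" for y
      using h(2) closure_subset E(1) that by (meson less_imp_le subsetD)
    ultimately have "nlop K D h x \<le> nlop K E h x"
      using x D(1) by (intro nlop_mono_domain[OF E DE D(2)]) auto
    also have "\<dots> = nlop K \<Omega> h x" using nlop_eq_nlop_Int_ball[of x r] x by (simp add: D_def E_def)
    also have "\<dots> \<le> - (a x + l) * h x" using super[of x] x D(1) by (auto simp: algebra_simps)
    finally show ?thesis .
  qed
  have "ereal l \<le> lambda_v K a D"
  proof (rule le_lambda_vI)
    fix \<psi> assume "L2 ?M \<psi>"
    then have \<psi>: "\<psi> \<in> borel_measurable ?M" "integrable ?M (\<lambda>x. (\<psi> x)\<^sup>2)" by (auto simp: L2_def)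
    have \<psi>i: "integrable ?M \<psi>"
      using finite_measure.square_integrable_imp_integrable[OF finite_measure_lebesgue_on_bounded[OF D(3,2)] \<psi>] .
    have i1: "integrable ?M (\<lambda>x. \<psi> x * nlop K D \<psi> x)"
      by (rule integrable_mult_bdd_measurable[OF \<psi>i bdd_measurable_nlop[OF D \<psi>i]])
    have i2: "integrable ?M (\<lambda>x. a x * (\<psi> x)\<^sup>2)"
      using integrable_mult_bdd_measurable[OF \<psi>(2) ba] by (simp add: mult.commute)
    have "(LINT x|?M. \<psi> x * nlop K D \<psi> x) \<le> (LINT x|?M. - (a x + l) * (\<psi> x)\<^sup>2)"
      by (rule quadratic_form_le_of_supersolution[OF D bh m bc super_D \<psi>])
    also have "\<dots> = - (LINT x|?M. a x * (\<psi> x)\<^sup>2) - l * (LINT x|?M. (\<psi> x)\<^sup>2)"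
      using i2 \<psi>(2) by (simp add: algebra_simps)
    finally have "l * (LINT x|?M. (\<psi> x)\<^sup>2)
        \<le> - ((LINT x|?M. \<psi> x * nlop K D \<psi> x) + (LINT x|?M. a x * (\<psi> x)\<^sup>2))" by simp
    also have "(LINT x|?M. \<psi> x * nlop K D \<psi> x) + (LINT x|?M. a x * (\<psi> x)\<^sup>2)
        = (LINT x|?M. (nlop K D \<psi> x + a x * \<psi> x) * \<psi> x)"
      using i1 i2 by (simp add: algebra_simps power2_eq_square)
    finally show "l * (LINT x|?M. (\<psi> x)\<^sup>2) \<le> - (LINT x|?M. (nlop K D \<psi> x + a x * \<psi> x) * \<psi> x)" .
  qed
  then show ?thesis by (simp add: D_def)
qed

lemma lambda_p_le_liminf:
  assumes "continuous_on (closure \<Omega>) a"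
  shows "lambda_p K a \<Omega> \<le> liminf (\<lambda>n::nat. lambda_v K a (\<Omega> \<inter> ball 0 (real n)))"
  unfolding lambda_p_def
proof (rule Sup_least, clarify)
  fix l h assume "continuous_on (closure \<Omega>) h" "\<forall>x\<in>closure \<Omega>. 0 < h x"
    "\<forall>x\<in>\<Omega>. nlop K \<Omega> h x + a x * h x + l * h x \<le> 0"
  then have "\<forall>n. ereal l \<le> lambda_v K a (\<Omega> \<inter> ball 0 (real n))"
    using le_lambda_v_of_supersolution[OF assms] by blast
  then show "ereal l \<le> liminf (\<lambda>n::nat. lambda_v K a (\<Omega> \<inter> ball 0 (real n)))"
    by (intro Liminf_bounded always_eventually)
qed

end

subsection \<open>Shell estimates and the upper bound\<close>

context nonlocal_kernel
begin

lemma nlop_cross_term_le: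
  assumes E: "E \<subseteq> \<Omega>" "E \<in> sets lebesgue" "bounded E" and A: "A \<in> sets lebesgue"
    and x: "x \<in> \<Omega>" and h: "bdd_measurable E h"
  shows "h x * nlop K E (\<lambda>y. indicator A y * h y) x
    \<le> ((h x)\<^sup>2 * nlop K E (indicator A) x + nlop K E (\<lambda>y. indicator A y * (h y)\<^sup>2) x) / 2"
proof -
  let ?M = "lebesgue_on E"
  have bA: "bdd_measurable E (indicator A)" by (rule bdd_measurable_indicator[OF A])
  have int: "integrable ?M (\<lambda>y. K x y * f y)" if "bdd_measurable E f" for f
    by (rule integrable_K_mult[OF E x integrable_bdd_measurable[OF E(3,2) that]])
  have k1: "integrable ?M (\<lambda>y. K x y * indicator A y)" by (rule int[OF bA])
  have k2: "integrable ?M (\<lambda>y. K x y * (indicator A y * (h y)\<^sup>2))"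
    unfolding power2_eq_square by (intro int bdd_measurable_mult bA h)
  have k3: "integrable ?M (\<lambda>y. K x y * (indicator A y * h y))"
    by (intro int bdd_measurable_mult bA h)
  have "h x * nlop K E (\<lambda>y. indicator A y * h y) x = (LINT y|?M. h x * (K x y * (indicator A y * h y)))"
    by (simp add: nlop_def)
  also have "\<dots> \<le> (LINT y|?M. ((h x)\<^sup>2 * (K x y * indicator A y) + K x y * (indicator A y * (h y)\<^sup>2)) / 2)"
  proof (rule integral_mono)
    show "integrable ?M (\<lambda>y. h x * (K x y * (indicator A y * h y)))" using k3 by simp
    show "integrable ?M (\<lambda>y. ((h x)\<^sup>2 * (K x y * indicator A y) + K x y * (indicator A y * (h y)\<^sup>2)) / 2)"
      using k1 k2 by simp
    fix y assume "y \<in> space ?M"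
    then have "0 \<le> K x y * indicator A y" using K_nonneg[OF x] E(1) by auto
    then have "(K x y * indicator A y) * (2 * h x * h y) \<le> (K x y * indicator A y) * ((h x)\<^sup>2 + (h y)\<^sup>2)"
      by (rule mult_left_mono[OF sum_squares_bound])
    then show "h x * (K x y * (indicator A y * h y))
        \<le> ((h x)\<^sup>2 * (K x y * indicator A y) + K x y * (indicator A y * (h y)\<^sup>2)) / 2"
      by (simp add: field_simps)
  qed
  also have "\<dots> = ((h x)\<^sup>2 * nlop K E (indicator A) x + nlop K E (\<lambda>y. indicator A y * (h y)\<^sup>2) x) / 2"
    using k1 k2 by (simp add: nlop_def)
  finally show ?thesis .
qed

lemma nlop_indicator_shell_le:
  assumes E: "E = \<Omega> \<inter> ball 0 (t + r0)" and D: "D = \<Omega> \<inter> ball 0 t" and x: "x \<in> E"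
  shows "nlop K E (indicator (E - D)) x \<le> kernel_mass * indicator (- ball 0 (t - r0)) x"
proof (cases "x \<in> ball 0 (t - r0)")
  case True
  have "nlop K E (indicator (E - D)) x = 0"
  proof (rule nlop_indicator_eq_0_far)
    show "x \<in> \<Omega>" "E \<subseteq> \<Omega>" using x E by auto
    fix y assume "y \<in> (E - D) \<inter> E"
    then have "t \<le> norm y" using D E by auto
    moreover have "norm y \<le> norm x + dist x y" by (metis dist_commute dist_norm norm_triangle_sub)
    ultimately show "r0 \<le> dist x y" using True by simp
  qed
  then show ?thesis using True by simp
next
  case False
  have "nlop K E (indicator (E - D)) x \<le> kernel_mass"
    using x E D Omega_open
    by (intro nlop_le_kernel_mass bdd_measurable_indicator) (auto simp: borel_open indicator_def)
  then show ?thesis using False by simp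
qed

lemma integral_indicator_mult_nlop_le:
  assumes S: "S \<subseteq> \<Omega>" "S \<in> sets lebesgue" "bounded S" and D: "D \<in> sets lebesgue"
    and v: "bdd_measurable S v" "\<And>x. x \<in> S \<Longrightarrow> 0 \<le> v x"
  shows "(LINT x|lebesgue_on S. indicator D x * nlop K S v x) \<le> kernel_mass * (LINT x|lebesgue_on S. v x)"
proof -
  let ?M = "lebesgue_on S"
  have bD: "bdd_measurable S (indicator D)" by (rule bdd_measurable_indicator[OF D])
  note int = integrable_bdd_measurable[OF S(3,2)]
  have "(LINT x|?M. indicator D x * nlop K S v x) = (LINT x|?M. v x * nlop K S (indicator D) x)"
    by (rule nlop_symmetric[OF S bD int[OF v(1)]])
  also have "\<dots> \<le> (LINT x|?M. kernel_mass * v x)"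
  proof (rule integral_mono)
    show "integrable ?M (\<lambda>x. v x * nlop K S (indicator D) x)"
      by (intro int bdd_measurable_mult v(1) bdd_measurable_nlop[OF S] int[OF bD])
    show "integrable ?M (\<lambda>x. kernel_mass * v x)" using int[OF v(1)] by simp
    fix x assume "x \<in> space ?M"
    then have x: "x \<in> S" by simp
    have "nlop K S (indicator D) x \<le> kernel_mass"
      using x S(1) by (intro nlop_le_kernel_mass[OF S _ bD]) (auto simp: indicator_def)
    then show "v x * nlop K S (indicator D) x \<le> kernel_mass * v x"
      using v(2)[OF x] by (simp add: mult.commute mult_left_mono)
  qed
  finally show ?thesis by simp
qed

lemma integral_shell_weight_le:
  assumes D: "D = \<Omega> \<inter> ball 0 t" and E: "E = \<Omega> \<inter> ball 0 (t + r0)"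
    and f: "bdd_measurable E f" "\<And>x. x \<in> E \<Longrightarrow> 0 \<le> f x"
  shows "(LINT x|lebesgue_on E. indicator D x * (f x * nlop K E (indicator (E - D)) x))
    \<le> kernel_mass * (LINT x|lebesgue_on E. indicator (D - ball 0 (t - r0)) x * f x)"
proof -
  let ?E = "lebesgue_on E" and ?B = "ball (0::'n) (t - r0)"
  have Es: "E \<subseteq> \<Omega>" "E \<in> sets lebesgue" "bounded E" and sets: "D \<in> sets lebesgue" "E - D \<in> sets lebesgue"
    "D - ?B \<in> sets lebesgue"
    using Omega_open r0_pos by (auto simp: D E borel_open)
  note int = integrable_bdd_measurable[OF Es(3,2)]
  have "(LINT x|?E. indicator D x * (f x * nlop K E (indicator (E - D)) x))
      \<le> (LINT x|?E. kernel_mass * (indicator (D - ?B) x * f x))"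
  proof (rule integral_mono)
    show "integrable ?E (\<lambda>x. indicator D x * (f x * nlop K E (indicator (E - D)) x))"
      using sets by (intro int bdd_measurable_mult bdd_measurable_indicator f(1) bdd_measurable_nlop[OF Es])
    show "integrable ?E (\<lambda>x. kernel_mass * (indicator (D - ?B) x * f x))"
      using int[OF bdd_measurable_mult[OF bdd_measurable_indicator[OF sets(3)] f(1)]] by simp
    fix x assume x: "x \<in> space ?E"
    then have "nlop K E (indicator (E - D)) x \<le> kernel_mass * indicator (- ?B) x"
      by (intro nlop_indicator_shell_le[OF E D]) simp
    then have "f x * nlop K E (indicator (E - D)) x \<le> f x * (kernel_mass * indicator (- ?B) x)"
      using f(2) x by (intro mult_left_mono) auto
    then show "indicator D x * (f x * nlop K E (indicator (E - D)) x) \<le> kernel_mass * (indicator (D - ?B) x * f x)"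
      by (cases "x \<in> ?B") (simp_all add: indicator_def mult.commute)
  qed
  then show ?thesis by simp
qed

lemma shell_interaction_le:
  assumes h: "continuous_on \<Omega> h" "\<And>x. x \<in> \<Omega> \<Longrightarrow> \<bar>h x\<bar> \<le> B"
    and D: "D = \<Omega> \<inter> ball 0 t" and E: "E = \<Omega> \<inter> ball 0 (t + r0)"
  shows "(LINT x|lebesgue_on D. h x * nlop K E (\<lambda>y. indicator (E - D) y * h y) x)
    \<le> kernel_mass / 2 * (L2_mass_ball \<Omega> h (t + r0) - L2_mass_ball \<Omega> h (t - r0))"
proof -
  let ?E = "lebesgue_on E" and ?B = "ball (0::'n) (t - r0)"
  have Es: "E \<subseteq> \<Omega>" "E \<in> sets lebesgue" "bounded E" and Ds: "D \<subseteq> E" "D \<in> sets lebesgue"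
    using Omega_open r0_pos by (auto simp: D E borel_open)
  have sets: "E - D \<in> sets lebesgue" "D - ?B \<in> sets lebesgue"
    using Es Ds by (auto simp: borel_open)
  have bh: "bdd_measurable E h" by (rule bdd_measurable_continuous_subset[OF h Es(1,2)])
  note int = integrable_bdd_measurable[OF Es(3,2)]
  have bh2: "bdd_measurable E (\<lambda>x. indicator A x * (h x)\<^sup>2)" if "A \<in> sets lebesgue" for A
    unfolding power2_eq_square by (intro bdd_measurable_mult bdd_measurable_indicator that bh)
  define G where "G = nlop K E (\<lambda>y. indicator (E - D) y * h y)"
  define P where "P = nlop K E (indicator (E - D))"
  define R where "R = nlop K E (\<lambda>y. indicator (E - D) y * (h y)\<^sup>2)"
  have bG: "bdd_measurable E G"
    unfolding G_def using sets(1) bh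
    by (intro bdd_measurable_nlop[OF Es] int bdd_measurable_mult bdd_measurable_indicator)
  have bP: "bdd_measurable E P"
    unfolding P_def using sets(1) by (intro bdd_measurable_nlop[OF Es] int bdd_measurable_indicator)
  have bR: "bdd_measurable E R"
    unfolding R_def by (intro bdd_measurable_nlop[OF Es] int bh2 sets(1))
  have intA: "integrable ?E (\<lambda>x. indicator D x * ((h x)\<^sup>2 * P x))"
    and intB: "integrable ?E (\<lambda>x. indicator D x * R x)"
    unfolding power2_eq_square using Ds(2) bh bP bR
    by (auto intro!: int bdd_measurable_mult bdd_measurable_indicator)
  have "(LINT x|lebesgue_on D. h x * G x) = (LINT x|?E. indicator D x * (h x * G x))"
    by (rule integral_lebesgue_on_subset[OF Ds Es(2)])
  also have "\<dots> \<le> (LINT x|?E. (indicator D x * ((h x)\<^sup>2 * P x) + indicator D x * R x) / 2)"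
  proof (rule integral_mono)
    show "integrable ?E (\<lambda>x. indicator D x * (h x * G x))"
      using Ds(2) bh bG by (intro int bdd_measurable_mult bdd_measurable_indicator)
    show "integrable ?E (\<lambda>x. (indicator D x * ((h x)\<^sup>2 * P x) + indicator D x * R x) / 2)"
      using intA intB by simp
    fix x assume "x \<in> space ?E"
    then have "h x * G x \<le> ((h x)\<^sup>2 * P x + R x) / 2"
      unfolding G_def P_def R_def using Es(1) by (intro nlop_cross_term_le[OF Es sets(1) _ bh]) auto
    then show "indicator D x * (h x * G x) \<le> (indicator D x * ((h x)\<^sup>2 * P x) + indicator D x * R x) / 2"
      by (simp add: indicator_def)
  qed
  also have "\<dots> = ((LINT x|?E. indicator D x * ((h x)\<^sup>2 * P x)) + (LINT x|?E. indicator D x * R x)) / 2"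
    using intA intB by simp
  also have "\<dots> \<le> (kernel_mass * (LINT x|?E. indicator (D - ?B) x * (h x)\<^sup>2)
      + kernel_mass * (LINT x|?E. indicator (E - D) x * (h x)\<^sup>2)) / 2"
  proof -
    have "(LINT x|?E. indicator D x * R x) \<le> kernel_mass * (LINT x|?E. indicator (E - D) x * (h x)\<^sup>2)"
      unfolding R_def using bh2[OF sets(1)] Ds(2)
      by (intro integral_indicator_mult_nlop_le[OF Es]) auto
    moreover have "(LINT x|?E. indicator D x * ((h x)\<^sup>2 * P x))
        \<le> kernel_mass * (LINT x|?E. indicator (D - ?B) x * (h x)\<^sup>2)"
      unfolding P_def using bh unfolding power2_eq_square
      by (intro integral_shell_weight_le[OF D E] bdd_measurable_mult) auto
    ultimately show ?thesis by simp
  qed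
  also have "\<dots> = kernel_mass / 2 * ((LINT x|?E. indicator (D - ?B) x * (h x)\<^sup>2)
      + (LINT x|?E. indicator (E - D) x * (h x)\<^sup>2))"
    by (simp add: algebra_simps)
  also have "(LINT x|?E. indicator (D - ?B) x * (h x)\<^sup>2) + (LINT x|?E. indicator (E - D) x * (h x)\<^sup>2)
      = L2_mass_ball \<Omega> h (t + r0) - L2_mass_ball \<Omega> h (t - r0)"
    by (rule L2_mass_ball_shell[OF Omega_open h D E r0_pos])
  finally show ?thesis by (simp add: G_def)
qed

end

context nonlocal_kernel
begin

lemma rayleigh_numerator_le_of_subsolution:
  assumes a: "continuous_on (closure \<Omega>) a"
    and h: "continuous_on \<Omega> h" "\<And>x. x \<in> \<Omega> \<Longrightarrow> \<bar>h x\<bar> \<le> B" "\<And>x. x \<in> \<Omega> \<Longrightarrow> 0 \<le> h x"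
    and sub: "\<And>x. x \<in> \<Omega> \<Longrightarrow> 0 \<le> nlop K \<Omega> h x + (a x + l) * h x"
  shows "- (LINT x|lebesgue_on (\<Omega> \<inter> ball 0 t). (nlop K (\<Omega> \<inter> ball 0 t) h x + a x * h x) * h x)
    \<le> l * L2_mass_ball \<Omega> h t + kernel_mass / 2 * (L2_mass_ball \<Omega> h (t + r0) - L2_mass_ball \<Omega> h (t - r0))"
proof -
  define D where "D = \<Omega> \<inter> ball 0 t"
  define E where "E = \<Omega> \<inter> ball 0 (t + r0)"
  define G where "G = nlop K E (\<lambda>y. indicator (E - D) y * h y)"
  let ?D = "lebesgue_on D"
  have Ds: "D \<subseteq> \<Omega>" "D \<in> sets lebesgue" "bounded D" and Es: "E \<subseteq> \<Omega>" "E \<in> sets lebesgue" "bounded E"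
    and DE: "D \<subseteq> E"
    using Omega_open r0_pos by (auto simp: D_def E_def borel_open)
  note bdd_h = bdd_measurable_continuous_subset[OF h(1,2)]
  have bhD: "bdd_measurable D h" and bhE: "bdd_measurable E h" using bdd_h Ds Es by auto
  have baD: "bdd_measurable D a" by (rule bdd_measurable_continuous_closure[OF a Ds(3,1,2)])
  have bGD: "bdd_measurable D G"
    unfolding G_def using Es Ds DE bhE
    by (intro bdd_measurable_subset[OF bdd_measurable_nlop[OF Es]] integrable_bdd_measurable
        bdd_measurable_mult bdd_measurable_indicator) auto
  have pointwise: "- (l * (h x)\<^sup>2) - h x * G x \<le> (nlop K D h x + a x * h x) * h x" if x: "x \<in> D" for x
  proof -
    have "nlop K D h x + G x = nlop K \<Omega> h x"
      using nlop_split[OF Es DE Ds(2) _ bhE] nlop_eq_nlop_Int_ball[of x t] x Ds(1)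
      by (auto simp: G_def D_def E_def)
    then have "- (l * h x) - G x \<le> nlop K D h x + a x * h x"
      using sub[of x] x Ds(1) unfolding distrib_right by auto
    then have "(- (l * h x) - G x) * h x \<le> (nlop K D h x + a x * h x) * h x"
      using h(3)[of x] x Ds(1) by (intro mult_right_mono) auto
    then show ?thesis by (simp add: algebra_simps power2_eq_square)
  qed
  have "- (l * L2_mass_ball \<Omega> h t) - (LINT x|?D. h x * G x)
      = (LINT x|?D. - (l * (h x)\<^sup>2) - h x * G x)"
    using integrable_square_Int_ball[OF Omega_open h(1,2), of t]
      integrable_bdd_measurable[OF Ds(3,2) bdd_measurable_mult[OF bhD bGD]]
    by (simp add: L2_mass_ball_def D_def)
  also have "\<dots> \<le> (LINT x|?D. (nlop K D h x + a x * h x) * h x)"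
  proof (rule integral_mono)
    show "integrable ?D (\<lambda>x. - (l * (h x)\<^sup>2) - h x * G x)"
      unfolding power2_eq_square
      by (intro integrable_bdd_measurable[OF Ds(3,2)] bdd_measurable_diff bdd_measurable_uminus
          bdd_measurable_mult bdd_measurable_const bhD bGD)
    show "integrable ?D (\<lambda>x. (nlop K D h x + a x * h x) * h x)"
      by (intro integrable_bdd_measurable[OF Ds(3,2)] bdd_measurable_mult bdd_measurable_add
          bdd_measurable_nlop[OF Ds] integrable_bdd_measurable[OF Ds(3,2)] bhD baD)
  qed (use pointwise in simp)
  finally show ?thesis
    using shell_interaction_le[OF h(1,2) D_def E_def] unfolding D_def[symmetric] G_def by linarith
qed

lemma lambda_v_le_shell_quotient:
  assumes a: "continuous_on (closure \<Omega>) a"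
    and h: "continuous_on \<Omega> h" "\<And>x. x \<in> \<Omega> \<Longrightarrow> \<bar>h x\<bar> \<le> B" "\<And>x. x \<in> \<Omega> \<Longrightarrow> 0 \<le> h x"
    and sub: "\<And>x. x \<in> \<Omega> \<Longrightarrow> 0 \<le> nlop K \<Omega> h x + (a x + l) * h x"
    and pos: "L2_mass_ball \<Omega> h s > 0"
  shows "lambda_v K a (\<Omega> \<inter> ball 0 s)
    \<le> ereal (l + kernel_mass / 2 * (L2_mass_ball \<Omega> h (s + r0) - L2_mass_ball \<Omega> h (s - r0)) / L2_mass_ball \<Omega> h s)"
proof -
  let ?S = "\<Omega> \<inter> ball 0 s" and ?m = "L2_mass_ball \<Omega> h"
  let ?N = "LINT x|lebesgue_on ?S. (nlop K ?S h x + a x * h x) * h x"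
  note L2_Int_ball[OF Omega_open h(1,2), of s]
  moreover have "\<not> (AE x in lebesgue_on ?S. h x = 0)"
  proof
    assume "AE x in lebesgue_on ?S. h x = 0"
    then have "AE x in lebesgue_on ?S. (h x)\<^sup>2 = 0" by (rule eventually_mono) simp
    then have "?m s = 0" unfolding L2_mass_ball_def by (rule integral_eq_zero_AE)
    then show False using pos by simp
  qed
  ultimately have "lambda_v K a ?S \<le> ereal (- ?N / ?m s)"
    unfolding L2_mass_ball_def by (rule lambda_v_le_rayleigh)
  also have "- ?N / ?m s \<le> (l * ?m s + kernel_mass / 2 * (?m (s + r0) - ?m (s - r0))) / ?m s"
    using rayleigh_numerator_le_of_subsolution[OF a h sub, of s] pos by (intro divide_right_mono) auto
  also have "\<dots> = l + kernel_mass / 2 * (?m (s + r0) - ?m (s - r0)) / ?m s"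
    using pos by (simp add: field_simps)
  finally show ?thesis by simp
qed

lemma L2_mass_ball_growth_step:
  assumes a: "continuous_on (closure \<Omega>) a"
    and h: "continuous_on \<Omega> h" "\<And>x. x \<in> \<Omega> \<Longrightarrow> \<bar>h x\<bar> \<le> B" "\<And>x. x \<in> \<Omega> \<Longrightarrow> 0 \<le> h x"
    and sub: "\<And>x. x \<in> \<Omega> \<Longrightarrow> 0 \<le> nlop K \<Omega> h x + (a x + l) * h x"
    and \<epsilon>: "\<epsilon> > 0" and d: "r0 \<le> d" and pos: "L2_mass_ball \<Omega> h s > 0"
    and large: "ereal (l + \<epsilon>) < lambda_v K a (\<Omega> \<inter> ball 0 s)"
  shows "(1 + 2 * \<epsilon> / kernel_mass) * L2_mass_ball \<Omega> h (s - d) \<le> L2_mass_ball \<Omega> h (s + d)"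
proof -
  let ?m = "L2_mass_ball \<Omega> h" and ?q = "2 * \<epsilon> / kernel_mass"
  note mono = L2_mass_ball_mono[OF Omega_open h(1,2)]
  have q: "?q > 0" using \<epsilon> kernel_mass_pos by simp
  have "ereal (l + \<epsilon>) < ereal (l + kernel_mass / 2 * (?m (s + r0) - ?m (s - r0)) / ?m s)"
    using large lambda_v_le_shell_quotient[OF a h sub pos] by (rule less_le_trans)
  then have grow: "?q * ?m s < ?m (s + r0) - ?m (s - r0)"
    using pos kernel_mass_pos by (simp add: field_simps)
  have "(1 + ?q) * ?m (s - d) \<le> (1 + ?q) * ?m (s - r0)"
    using mono[of "s - d" "s - r0"] d q by (intro mult_left_mono) auto
  also have "\<dots> = ?m (s - r0) + ?q * ?m (s - r0)" by (simp add: algebra_simps)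
  also have "\<dots> \<le> ?m (s - r0) + ?q * ?m s"
    using mono[of "s - r0" s] r0_pos q by (intro add_left_mono mult_left_mono) auto
  also have "\<dots> \<le> ?m (s + d)" using grow mono[of "s + r0" "s + d"] d by simp
  finally show ?thesis .
qed

lemma frequently_lambda_v_le:
  assumes a: "continuous_on (closure \<Omega>) a"
    and h: "continuous_on \<Omega> h" "Linfty (lebesgue_on \<Omega>) h" "\<And>x. x \<in> \<Omega> \<Longrightarrow> 0 \<le> h x" "\<exists>x\<in>\<Omega>. h x \<noteq> 0"
    and sub: "\<And>x. x \<in> \<Omega> \<Longrightarrow> 0 \<le> nlop K \<Omega> h x + (a x + l) * h x"
    and \<epsilon>: "\<epsilon> > 0"
  shows "\<exists>\<^sub>F n in sequentially. lambda_v K a (\<Omega> \<inter> ball 0 (real n)) \<le> ereal (l + \<epsilon>)"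
proof (rule ccontr)
  assume "\<not> ?thesis"
  then obtain N0 where "\<forall>n\<ge>N0. \<not> lambda_v K a (\<Omega> \<inter> ball 0 (real n)) \<le> ereal (l + \<epsilon>)"
    unfolding frequently_sequentially by blast
  then have N0: "\<And>n. n \<ge> N0 \<Longrightarrow> ereal (l + \<epsilon>) < lambda_v K a (\<Omega> \<inter> ball 0 (real n))"
    by (simp add: not_le)
  obtain B where hB: "\<And>x. x \<in> \<Omega> \<Longrightarrow> \<bar>h x\<bar> \<le> B"
  proof -
    from h(2) obtain B where "AE x in lebesgue_on \<Omega>. \<bar>h x\<bar> \<le> B" by (auto simp: Linfty_def)
    then show thesis using abs_le_if_AE_abs_le_open[OF Omega_open h(1)] that by blast
  qed
  obtain x0 where x0: "x0 \<in> \<Omega>" "h x0 \<noteq> 0" using h(4) by auto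
  let ?m = "L2_mass_ball \<Omega> h"
  define k where "k = nat \<lceil>r0\<rceil>"
  have ceil_pos: "(0::int) < \<lceil>r0\<rceil>" using r0_pos by simp
  then have "nat 1 \<le> nat \<lceil>r0\<rceil>" by (intro nat_mono) linarith
  with ceil_pos have k: "r0 \<le> real k" "k \<ge> 1" by (simp_all add: k_def)
  define N1 where "N1 = max N0 (nat \<lceil>norm x0\<rceil> + 1)"
  have m_pos: "?m (real n) > 0" if "n \<ge> N1" for n
  proof (rule L2_mass_ball_pos[OF Omega_open h(1) hB x0])
    have "nat \<lceil>norm x0\<rceil> + 1 \<le> n" using that by (simp add: N1_def)
    then have "real (nat \<lceil>norm x0\<rceil> + 1) \<le> real n" by (rule of_nat_mono)
    then have "1 + real_of_int \<lceil>norm x0\<rceil> \<le> real n" by simp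
    then show "norm x0 < real n" using le_of_int_ceiling[of "norm x0"] by linarith
  qed
  show False
  proof (rule polynomial_bound_excludes_geometric_growth[where m = ?m and q = "1 + 2 * \<epsilon> / kernel_mass"])
    show "\<And>s s'. s \<le> s' \<Longrightarrow> ?m s \<le> ?m s'" by (rule L2_mass_ball_mono[OF Omega_open h(1) hB])
    show "\<And>s. 0 \<le> s \<Longrightarrow> ?m s \<le> B\<^sup>2 * unit_ball_vol DIM('n) * s ^ DIM('n)"
      by (rule L2_mass_ball_le[OF Omega_open h(1) hB])
    show "1 + 2 * \<epsilon> / kernel_mass > 1" using \<epsilon> kernel_mass_pos by simp
    show "?m (real N1) > 0" by (rule m_pos) simp
    show "1 \<le> k" by (rule k(2))
    fix n assume n: "N1 \<le> n"
    then show "(1 + 2 * \<epsilon> / kernel_mass) * ?m (real n - real k) \<le> ?m (real n + real k)"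
      using N0 k(1) by (intro L2_mass_ball_growth_step[OF a h(1) hB h(3) sub \<epsilon> _ m_pos[OF n]])
        (auto simp: N1_def)
  qed
qed

lemma liminf_le_of_subsolution:
  assumes a: "continuous_on (closure \<Omega>) a"
    and h: "continuous_on \<Omega> h" "Linfty (lebesgue_on \<Omega>) h" "\<And>x. x \<in> \<Omega> \<Longrightarrow> 0 \<le> h x" "\<exists>x\<in>\<Omega>. h x \<noteq> 0"
    and sub: "\<And>x. x \<in> \<Omega> \<Longrightarrow> 0 \<le> nlop K \<Omega> h x + (a x + l) * h x"
  shows "liminf (\<lambda>n::nat. lambda_v K a (\<Omega> \<inter> ball 0 (real n))) \<le> ereal l"
proof (rule ereal_le_epsilon2)
  fix \<epsilon> :: real assume "0 < \<epsilon>"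
  from Liminf_le_of_frequently[OF frequently_lambda_v_le[OF a h sub this]]
  show "liminf (\<lambda>n::nat. lambda_v K a (\<Omega> \<inter> ball 0 (real n))) \<le> ereal l + ereal \<epsilon>" by simp
qed

lemma liminf_le_lambda_p':
  assumes "continuous_on (closure \<Omega>) a"
  shows "liminf (\<lambda>n::nat. lambda_v K a (\<Omega> \<inter> ball 0 (real n))) \<le> lambda_p' K a \<Omega>"
  unfolding lambda_p'_def by (auto intro!: Inf_greatest liminf_le_of_subsolution[OF assms])

end

theorem lemma3p3:
  fixes \<Omega> :: "'n::euclidean_space set"
    and a :: "'n \<Rightarrow> real"
    and K :: "'n \<Rightarrow> 'n \<Rightarrow> real"
    and r0 r1 C0 c0 :: real
  assumes dom: "open \<Omega>" "connected \<Omega>" "\<Omega> \<noteq> {}" "\<not> bounded \<Omega>"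
    and a_cont: "continuous_on (closure \<Omega>) a"
    and a_inf: "Linfty (lebesgue_on \<Omega>) a"
    and K_nonneg: "\<forall>x\<in>\<Omega>. \<forall>y\<in>\<Omega>. K x y \<ge> 0"
    and K_meas: "\<forall>x\<in>\<Omega>. (\<lambda>y. K x y) \<in> borel_measurable (lebesgue_on \<Omega>)"
    and K_ucont: "AE y in lebesgue_on \<Omega>. uniformly_continuous_on \<Omega> (\<lambda>x. K x y)"
    and radii: "r0 \<ge> r1" "r1 > 0"
    and cbounds: "C0 \<ge> c0" "c0 > 0"
    and K_bounds: "\<forall>x\<in>\<Omega>. \<forall>y\<in>\<Omega>.
         C0 * indicator (\<Omega> \<inter> ball x r0) y \<ge> K x y \<and> K x y \<ge> c0 * indicator (\<Omega> \<inter> ball x r1) y"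
    and K_sym: "\<forall>x\<in>\<Omega>. \<forall>y\<in>\<Omega>. K x y = K y x"
    and p_inf: "Linfty (lebesgue_on \<Omega>) (\<lambda>x. LINT y|lebesgue_on \<Omega>. K x y)"
  shows "lambda_p K a \<Omega> \<le> liminf (\<lambda>n::nat. lambda_v K a (\<Omega> \<inter> ball 0 (real n)))
       \<and> liminf (\<lambda>n::nat. lambda_v K a (\<Omega> \<inter> ball 0 (real n))) \<le> lambda_p' K a \<Omega>"
proof -
  interpret nonlocal_kernel \<Omega> K r0 C0
    using dom(1,3) K_nonneg K_bounds K_meas K_ucont K_sym radii cbounds
    by unfold_locales auto
  show ?thesis using lambda_p_le_liminf[OF a_cont] liminf_le_lambda_p'[OF a_cont] by blast
qed

end
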